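(* Let $A$ be a reduced commutative ring with finitely many minimal prime ideals, and let $A\subseteq B$ be an extension of rings which preserves non-zero-divisors, i.e. every non-zero-divisor of $A$ is a non-zero-divisor of $B$. Then there is an exact sequence of abelian groups $$0\longrightarrow \mathfrak{C}(A,B)\longrightarrow \mathfrak{C}(A)\longrightarrow \mathfrak{C}(B),$$ in which the map $\mathfrak{C}(A)\to\mathfrak{C}(B)$ is the one induced by the ring map $T(A)\to T(B)$, $a/s\mapsto a/s$ (via $L\mapsto$ the $B$-submodule of $T(B)$ generated by the image of $L$).
   Context: All rings are commutative with identity. For an extension of rings $R\subseteq S$ and $R$-submodules $L,L'$ of $S$, $LL'$ is the $R$-submodule of finite sums $\sum x_ky_k$, $x_k\in L$, $y_k\in L'$. An $R$-submodule $L$ of $S$ is an invertible ideal of $R\subseteq S$ if $LL'=R$ for some $R$-submodule $L'$ of $S$; these form an abelian group $\mathscr{G}(R,S)$ under multiplication and $\mathfrak{C}(R,S)=\mathscr{G}(R,S)/\{Rx: x\in S^\ast\}$. $T(R)$ denotes the total ring of fractions of $R$ (localization at the set of non-zero-divisors), and $\mathfrak{C}(R)=\mathfrak{C}(R,T(R))$. *)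

theory Defs
  imports "HOL-Algebra.Algebra"
begin

text \<open>S is a ring (HOL-Algebra record), R \<subseteq> carrier S a subring.\<close>

definition R_submod :: "('a,'m) ring_scheme \<Rightarrow> 'a set \<Rightarrow> 'a set \<Rightarrow> bool" where
  "R_submod S R L \<longleftrightarrow> L \<subseteq> carrier S \<and> \<zero>\<^bsub>S\<^esub> \<in> L \<and>
     (\<forall>x\<in>L. \<forall>y\<in>L. x \<oplus>\<^bsub>S\<^esub> y \<in> L) \<and> (\<forall>r\<in>R. \<forall>x\<in>L. r \<otimes>\<^bsub>S\<^esub> x \<in> L)"

definition submod_prod :: "('a,'m) ring_scheme \<Rightarrow> 'a set \<Rightarrow> 'a set \<Rightarrow> 'a set" where
  "submod_prod S L L' = {z. \<exists>(n::nat) f g. (\<forall>i<n. f i \<in> L \<and> g i \<in> L') \<and>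
        z = finsum S (\<lambda>i. f i \<otimes>\<^bsub>S\<^esub> g i) {..<n}}"

definition invertible_ideal :: "('a,'m) ring_scheme \<Rightarrow> 'a set \<Rightarrow> 'a set \<Rightarrow> bool" where
  "invertible_ideal S R L \<longleftrightarrow> R_submod S R L \<and>
     (\<exists>L'. R_submod S R L' \<and> submod_prod S L L' = R)"

definition Inv_group :: "('a,'m) ring_scheme \<Rightarrow> 'a set \<Rightarrow> 'a set monoid" where
  "Inv_group S R = \<lparr>carrier = {L. invertible_ideal S R L}, monoid.mult = submod_prod S, one = R\<rparr>"

definition principal_ideals :: "('a,'m) ring_scheme \<Rightarrow> 'a set \<Rightarrow> 'a set set" where
  "principal_ideals S R = {{r \<otimes>\<^bsub>S\<^esub> x | r. r \<in> R} | x. x \<in> Units S}"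

text \<open>\<C>(R,S) = \<G>(R,S) / {Rx : x \<in> S*}.\<close>
definition Cart_group :: "('a,'m) ring_scheme \<Rightarrow> 'a set \<Rightarrow> 'a set set monoid" where
  "Cart_group S R = Inv_group S R Mod principal_ideals S R"

definition nzd :: "('a,'m) ring_scheme \<Rightarrow> 'a \<Rightarrow> bool" where
  "nzd R s \<longleftrightarrow> s \<in> carrier R \<and> (\<forall>x\<in>carrier R. s \<otimes>\<^bsub>R\<^esub> x = \<zero>\<^bsub>R\<^esub> \<longrightarrow> x = \<zero>\<^bsub>R\<^esub>)"

definition frac_rel :: "('a,'m) ring_scheme \<Rightarrow> (('a \<times> 'a) \<times> ('a \<times> 'a)) set" where
  "frac_rel R = {((a,s),(b,t)). a \<in> carrier R \<and> b \<in> carrier R \<and> nzd R s \<and> nzd R t \<and>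
       a \<otimes>\<^bsub>R\<^esub> t = b \<otimes>\<^bsub>R\<^esub> s}"

definition frac :: "('a,'m) ring_scheme \<Rightarrow> 'a \<Rightarrow> 'a \<Rightarrow> ('a \<times> 'a) set" where
  "frac R a s = frac_rel R `` {(a,s)}"

definition Tot :: "('a,'m) ring_scheme \<Rightarrow> ('a \<times> 'a) set ring" where
  "Tot R = \<lparr>carrier = {frac R a s | a s. a \<in> carrier R \<and> nzd R s},
     monoid.mult = (\<lambda>x y. \<Union>{frac R (a \<otimes>\<^bsub>R\<^esub> b) (s \<otimes>\<^bsub>R\<^esub> t) | a s b t. (a,s) \<in> x \<and> (b,t) \<in> y}),
     one = frac R \<one>\<^bsub>R\<^esub> \<one>\<^bsub>R\<^esub>,
     ring.zero = frac R \<zero>\<^bsub>R\<^esub> \<one>\<^bsub>R\<^esub>,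
     ring.add = (\<lambda>x y. \<Union>{frac R (a \<otimes>\<^bsub>R\<^esub> t \<oplus>\<^bsub>R\<^esub> b \<otimes>\<^bsub>R\<^esub> s) (s \<otimes>\<^bsub>R\<^esub> t) | a s b t. (a,s) \<in> x \<and> (b,t) \<in> y})\<rparr>"

definition canon :: "('a,'m) ring_scheme \<Rightarrow> ('a \<times> 'a) set set" where
  "canon R = {frac R a \<one>\<^bsub>R\<^esub> | a. a \<in> carrier R}"

text \<open>\<C>(R) = \<C>(R, T(R)).\<close>
definition Cl :: "('a,'m) ring_scheme \<Rightarrow> ('a \<times> 'a) set set set monoid" where
  "Cl R = Cart_group (Tot R) (canon R)"

text \<open>T(A) \<rightarrow> T(B), a/s \<mapsto> a/s (A given as subring of carrier B, same operations).\<close>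
definition tot_map :: "('a,'m) ring_scheme \<Rightarrow> 'a set \<Rightarrow> ('a \<times> 'a) set \<Rightarrow> ('a \<times> 'a) set" where
  "tot_map B A x = \<Union>{frac B a s | a s. (a,s) \<in> x}"

definition gen_submod :: "('a,'m) ring_scheme \<Rightarrow> 'a set \<Rightarrow> 'a set \<Rightarrow> 'a set" where
  "gen_submod S R Z = Inter {M. R_submod S R M \<and> Z \<subseteq> M}"

definition ext_ideal :: "('a,'m) ring_scheme \<Rightarrow> 'a set \<Rightarrow> ('a \<times> 'a) set set \<Rightarrow> ('a \<times> 'a) set set" where
  "ext_ideal B A L = gen_submod (Tot B) (canon B) (tot_map B A ` L)"

definition Cl_map :: "('a,'m) ring_scheme \<Rightarrow> 'a set \<Rightarrow> ('a \<times> 'a) set set set \<Rightarrow> ('a \<times> 'a) set set set" where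
  "Cl_map B A K = principal_ideals (Tot B) (canon B) #>\<^bsub>Inv_group (Tot B) (canon B)\<^esub>
                     ext_ideal B A (SOME L. L \<in> K)"

definition reduced :: "('a,'m) ring_scheme \<Rightarrow> bool" where
  "reduced R \<longleftrightarrow> (\<forall>a\<in>carrier R. \<forall>n::nat. a [^]\<^bsub>R\<^esub> n = \<zero>\<^bsub>R\<^esub> \<longrightarrow> a = \<zero>\<^bsub>R\<^esub>)"

definition minimal_primes :: "('a,'m) ring_scheme \<Rightarrow> 'a set set" where
  "minimal_primes R = {P. primeideal P R \<and> (\<forall>Q. primeideal Q R \<and> Q \<subseteq> P \<longrightarrow> Q = P)}"

end

theory Submission
  imports Defs
begin

text \<open>Since \<open>A\<close> is reduced with finitely many minimal primes, every \<open>a \<in> A\<close> satisfies \<open>a t = a\<^sup>2\<close>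
  for some non-zero-divisor \<open>t\<close>, so \<open>T(A)\<close> is von Neumann regular, and over a von Neumann regular
  ring every invertible submodule is principal. As \<open>A \<subseteq> B\<close> preserves non-zero-divisors, \<open>T(A)\<close>
  embeds into \<open>T(B)\<close> as a subring \<open>T'\<close>. For an invertible \<open>A\<close>-submodule \<open>I\<close> of \<open>B\<close>, the
  submodule \<open>T' I\<close> is therefore \<open>T' u\<close> for a unit \<open>u\<close> of \<open>T(B)\<close>, and \<open>u\<^sup>-\<^sup>1 I\<close> is an invertible
  \<open>A\<close>-submodule of \<open>T(A)\<close> whose class in \<open>\<C>(A)\<close> depends only on \<open>I\<close>. This defines a
  homomorphism on \<open>\<G>(A,B)\<close> whose kernel consists of the principal submodules \<open>A x\<close>, \<open>x\<close> a unit
  of \<open>B\<close>, and whose image is the kernel of \<open>\<C>(A) \<rightarrow> \<C>(B)\<close>: if \<open>B L = w B\<close>, then \<open>w\<^sup>-\<^sup>1 L\<close> is an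
  invertible \<open>A\<close>-submodule of \<open>B\<close> mapped to the class of \<open>L\<close>.\<close>

section \<open>Products of submodules and the group of invertible submodules\<close>

context cring
begin

lemma R_submod_carrier: "R_submod R K L \<Longrightarrow> L \<subseteq> carrier R"
  unfolding R_submod_def by simp

lemma zero_in_submod_prod: "\<zero> \<in> submod_prod R L L'"
  unfolding submod_prod_def by (rule CollectI, rule exI[of _ 0]) auto

lemma submod_prod_add_mult:
  assumes "L \<subseteq> carrier R" "L' \<subseteq> carrier R" "x \<in> L" "y \<in> L'" "w \<in> submod_prod R L L'"
  shows "x \<otimes> y \<oplus> w \<in> submod_prod R L L'"
proof -
  from assms(5) obtain n :: nat and f g where fg: "\<forall>i<n. f i \<in> L \<and> g i \<in> L'"
    and w: "w = finsum R (\<lambda>i. f i \<otimes> g i) {..<n}"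
    unfolding submod_prod_def by blast
  define f' where "f' = f(n := x)"
  define g' where "g' = g(n := y)"
  have fg': "\<forall>i<Suc n. f' i \<in> L \<and> g' i \<in> L'" using fg assms(3,4)
    by (auto simp: f'_def g'_def less_Suc_eq)
  have "finsum R (\<lambda>i. f' i \<otimes> g' i) {..<Suc n} = f' n \<otimes> g' n \<oplus> finsum R (\<lambda>i. f' i \<otimes> g' i) {..<n}"
    unfolding lessThan_Suc using fg' assms(1,2) by (intro finsum_insert) (auto intro!: m_closed)
  also have "finsum R (\<lambda>i. f' i \<otimes> g' i) {..<n} = w" unfolding w
    using fg assms(1,2) by (intro finsum_cong') (auto simp: f'_def g'_def intro!: m_closed)
  finally have "x \<otimes> y \<oplus> w = finsum R (\<lambda>i. f' i \<otimes> g' i) {..<Suc n}"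
    by (simp add: f'_def g'_def)
  then show ?thesis using fg' unfolding submod_prod_def by blast
qed

lemma submod_prod_induct [consumes 3, case_names zero step]:
  assumes "z \<in> submod_prod R L L'" "L \<subseteq> carrier R" "L' \<subseteq> carrier R"
    and "P \<zero>"
    and "\<And>x y w. x \<in> L \<Longrightarrow> y \<in> L' \<Longrightarrow> w \<in> submod_prod R L L' \<Longrightarrow> P w \<Longrightarrow> P (x \<otimes> y \<oplus> w)"
  shows "P z"
proof -
  from assms(1) obtain n :: nat and f g where fg: "\<forall>i<n. f i \<in> L \<and> g i \<in> L'"
    and z: "z = finsum R (\<lambda>i. f i \<otimes> g i) {..<n}"
    unfolding submod_prod_def by blast
  have "\<forall>i<n. f i \<in> L \<and> g i \<in> L' \<Longrightarrow> P (finsum R (\<lambda>i. f i \<otimes> g i) {..<n})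
      \<and> finsum R (\<lambda>i. f i \<otimes> g i) {..<n} \<in> submod_prod R L L'"
  proof (induction n)
    case 0
    then show ?case using assms(4) zero_in_submod_prod by simp
  next
    case (Suc n)
    have split: "finsum R (\<lambda>i. f i \<otimes> g i) {..<Suc n} = f n \<otimes> g n \<oplus> finsum R (\<lambda>i. f i \<otimes> g i) {..<n}"
      unfolding lessThan_Suc using Suc.prems assms(2,3) by (intro finsum_insert) (auto intro!: m_closed)
    show ?case unfolding split
      using Suc assms(5) submod_prod_add_mult[OF assms(2,3)] by auto
  qed
  then show ?thesis using fg z by auto
qed

lemma mult_in_submod_prod:
  "L \<subseteq> carrier R \<Longrightarrow> L' \<subseteq> carrier R \<Longrightarrow> x \<in> L \<Longrightarrow> y \<in> L' \<Longrightarrow> x \<otimes> y \<in> submod_prod R L L'"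
  using submod_prod_add_mult[OF _ _ _ _ zero_in_submod_prod, of L L' x y] by (auto dest!: subsetD)

lemma submod_prod_least:
  assumes "L \<subseteq> carrier R" "L' \<subseteq> carrier R" "\<zero> \<in> M"
    "\<And>a b. a \<in> M \<Longrightarrow> b \<in> M \<Longrightarrow> a \<oplus> b \<in> M"
    "\<And>x y. x \<in> L \<Longrightarrow> y \<in> L' \<Longrightarrow> x \<otimes> y \<in> M"
  shows "submod_prod R L L' \<subseteq> M"
proof
  fix z assume "z \<in> submod_prod R L L'"
  then show "z \<in> M" using assms(1,2)
    by (induction rule: submod_prod_induct) (auto intro: assms)
qed

lemma submod_prod_carrier:
  "L \<subseteq> carrier R \<Longrightarrow> L' \<subseteq> carrier R \<Longrightarrow> submod_prod R L L' \<subseteq> carrier R"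
  by (rule submod_prod_least) (auto dest!: subsetD)

lemma submod_prod_add_closed:
  assumes "L \<subseteq> carrier R" "L' \<subseteq> carrier R" "a \<in> submod_prod R L L'" "b \<in> submod_prod R L L'"
  shows "a \<oplus> b \<in> submod_prod R L L'"
  using assms(3,1,2)
proof (induction rule: submod_prod_induct)
  case zero
  then show ?case using assms(4) submod_prod_carrier[OF assms(1,2)] by auto
next
  case (step x y w)
  have "b \<in> carrier R" using assms(4) submod_prod_carrier[OF assms(1,2)] by auto
  then have "x \<otimes> y \<oplus> w \<oplus> b = x \<otimes> y \<oplus> (w \<oplus> b)"
    using step assms submod_prod_carrier[OF assms(1,2)] by (auto intro!: a_assoc dest!: subsetD)
  then show ?case using submod_prod_add_mult[OF assms(1,2) step(1,2,4)] by simp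
qed

lemma submod_prod_comm:
  assumes "L \<subseteq> carrier R" "L' \<subseteq> carrier R"
  shows "submod_prod R L L' = submod_prod R L' L"
proof -
  have swap: "submod_prod R L1 L2 \<subseteq> submod_prod R L2 L1"
    if "L1 \<subseteq> carrier R" "L2 \<subseteq> carrier R" for L1 L2
  proof (rule submod_prod_least[OF that])
    fix x y assume "x \<in> L1" "y \<in> L2"
    then show "x \<otimes> y \<in> submod_prod R L2 L1"
      using mult_in_submod_prod[OF that(2,1)] that m_comm by (metis subsetD)
  qed (auto intro: zero_in_submod_prod submod_prod_add_closed[OF that(2,1)])
  show ?thesis using swap assms by blast
qed

lemma submod_prod_smult_closed:
  assumes "L \<subseteq> carrier R" "L' \<subseteq> carrier R" "\<And>r x. r \<in> K \<Longrightarrow> x \<in> L \<Longrightarrow> r \<otimes> x \<in> L"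
    "K \<subseteq> carrier R" "r \<in> K" "z \<in> submod_prod R L L'"
  shows "r \<otimes> z \<in> submod_prod R L L'"
  using assms(6,1,2)
proof (induction rule: submod_prod_induct)
  case zero
  then show ?case using assms(4,5) zero_in_submod_prod by auto
next
  case (step x y w)
  have "r \<otimes> (x \<otimes> y \<oplus> w) = (r \<otimes> x) \<otimes> y \<oplus> r \<otimes> w"
    using step assms(1,2,4,5) submod_prod_carrier[OF assms(1,2)]
    by (auto simp: r_distr m_assoc dest!: subsetD)
  then show ?case using submod_prod_add_mult[OF assms(1,2) assms(3)[OF assms(5) step(1)] step(2,4)] by simp
qed

lemma R_submod_submod_prod:
  assumes "R_submod R K L" "L' \<subseteq> carrier R" "K \<subseteq> carrier R"
  shows "R_submod R K (submod_prod R L L')"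
proof -
  have L: "L \<subseteq> carrier R" by (rule R_submod_carrier[OF assms(1)])
  have "\<And>r x. r \<in> K \<Longrightarrow> x \<in> L \<Longrightarrow> r \<otimes> x \<in> L" using assms(1) unfolding R_submod_def by blast
  then show ?thesis unfolding R_submod_def
    using submod_prod_carrier[OF L assms(2)] zero_in_submod_prod[of L L']
      submod_prod_add_closed[OF L assms(2)] submod_prod_smult_closed[OF L assms(2) _ assms(3)]
    by blast
qed

lemma submod_prod_assoc_subset:
  assumes "L1 \<subseteq> carrier R" "L2 \<subseteq> carrier R" "L3 \<subseteq> carrier R"
  shows "submod_prod R (submod_prod R L1 L2) L3 \<subseteq> submod_prod R L1 (submod_prod R L2 L3)"
proof -
  have c12: "submod_prod R L1 L2 \<subseteq> carrier R" and c23: "submod_prod R L2 L3 \<subseteq> carrier R"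
    using submod_prod_carrier assms by auto
  have "z \<otimes> w \<in> submod_prod R L1 (submod_prod R L2 L3)"
    if "z \<in> submod_prod R L1 L2" "w \<in> L3" for z w
    using that(1) assms(1,2)
  proof (induction rule: submod_prod_induct)
    case zero
    then show ?case using that(2) assms(3) zero_in_submod_prod by auto
  next
    case (step x y u)
    have "(x \<otimes> y \<oplus> u) \<otimes> w = x \<otimes> (y \<otimes> w) \<oplus> u \<otimes> w"
      using step c12 assms that(2) by (auto simp: l_distr m_assoc dest!: subsetD)
    then show ?case
      using step submod_prod_add_mult[OF assms(1) c23 step(1) mult_in_submod_prod[OF assms(2,3) step(2) that(2)]]
      by simp
  qed
  then show ?thesis
    by (intro submod_prod_least[OF c12 assms(3) zero_in_submod_prod submod_prod_add_closed[OF assms(1) c23]])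
qed

lemma submod_prod_assoc:
  assumes "L1 \<subseteq> carrier R" "L2 \<subseteq> carrier R" "L3 \<subseteq> carrier R"
  shows "submod_prod R (submod_prod R L1 L2) L3 = submod_prod R L1 (submod_prod R L2 L3)"
proof
  show "submod_prod R (submod_prod R L1 L2) L3 \<subseteq> submod_prod R L1 (submod_prod R L2 L3)"
    using submod_prod_assoc_subset[OF assms] .
  have "submod_prod R L1 (submod_prod R L2 L3) = submod_prod R (submod_prod R L3 L2) L1"
    using assms submod_prod_comm submod_prod_carrier by metis
  also have "\<dots> \<subseteq> submod_prod R L3 (submod_prod R L2 L1)"
    using submod_prod_assoc_subset[OF assms(3,2,1)] .
  also have "\<dots> = submod_prod R (submod_prod R L1 L2) L3"
    using assms submod_prod_comm submod_prod_carrier by metis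
  finally show "submod_prod R L1 (submod_prod R L2 L3) \<subseteq> submod_prod R (submod_prod R L1 L2) L3" .
qed

lemma R_submod_subring: "subring K R \<Longrightarrow> R_submod R K K"
  unfolding R_submod_def by (simp add: subringE(1,2,6,7))

lemma submod_prod_subring_left:
  assumes "subring K R" "R_submod R K L"
  shows "submod_prod R K L = L"
proof
  have K: "K \<subseteq> carrier R" "\<one> \<in> K" using subringE[OF assms(1)] by auto
  have L: "L \<subseteq> carrier R" by (rule R_submod_carrier[OF assms(2)])
  show "submod_prod R K L \<subseteq> L"
    by (rule submod_prod_least[OF K(1) L]) (use assms(2) in \<open>auto simp: R_submod_def\<close>)
  show "L \<subseteq> submod_prod R K L"
    using mult_in_submod_prod[OF K(1) L K(2)] L by (metis l_one subsetD subsetI)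
qed

lemma submod_prod_subring_extend:
  assumes K: "subring K R" and Z1: "Z1 \<subseteq> carrier R" and Z2: "Z2 \<subseteq> carrier R"
  shows "submod_prod R (submod_prod R K Z1) (submod_prod R K Z2) = submod_prod R K (submod_prod R Z1 Z2)"
proof -
  have Kc: "K \<subseteq> carrier R" using subringE(1)[OF K] .
  note c = submod_prod_carrier
  have "submod_prod R (submod_prod R K Z1) (submod_prod R K Z2)
      = submod_prod R K (submod_prod R Z1 (submod_prod R K Z2))"
    using submod_prod_assoc[OF Kc Z1 c[OF Kc Z2]] .
  also have "submod_prod R Z1 (submod_prod R K Z2) = submod_prod R K (submod_prod R Z1 Z2)"
    using submod_prod_assoc[OF Z1 Kc Z2] submod_prod_comm[OF Z1 Kc] submod_prod_assoc[OF Kc Z1 Z2]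
    by simp
  also have "submod_prod R K (submod_prod R K (submod_prod R Z1 Z2))
      = submod_prod R (submod_prod R K K) (submod_prod R Z1 Z2)"
    using submod_prod_assoc[OF Kc Kc c[OF Z1 Z2]] by simp
  also have "submod_prod R K K = K"
    using submod_prod_subring_left[OF K R_submod_subring[OF K]] .
  finally show ?thesis .
qed

lemma gen_submod_eq_submod_prod:
  assumes K: "subring K R" and Z: "Z \<subseteq> carrier R"
  shows "gen_submod R K Z = submod_prod R K Z"
proof -
  have Kc: "K \<subseteq> carrier R" using subringE(1)[OF K] .
  have "R_submod R K (submod_prod R K Z)"
    using R_submod_submod_prod[OF R_submod_subring[OF K] Z Kc] .
  moreover have "Z \<subseteq> submod_prod R K Z"
    using mult_in_submod_prod[OF Kc Z subringE(3)[OF K]] Z by (metis l_one subsetD subsetI)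
  moreover have "submod_prod R K Z \<subseteq> M" if "R_submod R K M" "Z \<subseteq> M" for M
    using that unfolding R_submod_def by (intro submod_prod_least[OF Kc Z]) auto
  ultimately show ?thesis unfolding gen_submod_def by blast
qed

lemma submod_prod_subring_absorb:
  assumes "subring K R" "subring K' R" "K' \<subseteq> K"
  shows "submod_prod R K K' = K"
proof
  have K: "K \<subseteq> carrier R" "K' \<subseteq> carrier R" using assms subringE(1) by auto
  show "submod_prod R K K' \<subseteq> K"
    by (rule submod_prod_least[OF K]) (use assms(3) subringE(2,6,7)[OF assms(1)] in auto)
  show "K \<subseteq> submod_prod R K K'"
    using mult_in_submod_prod[OF K _ subringE(3)[OF assms(2)]] K by (metis r_one subsetD subsetI)
qed

lemma submod_prod_subring_eq_if_one_mem:
  assumes "subring K R" "Z1 \<subseteq> K" "Z2 \<subseteq> K" "\<one> \<in> submod_prod R Z1 Z2"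
  shows "submod_prod R K Z1 = K"
proof
  have K: "K \<subseteq> carrier R" using subringE(1)[OF assms(1)] by auto
  have Z: "Z1 \<subseteq> carrier R" "Z2 \<subseteq> carrier R" using assms K by auto
  show "submod_prod R K Z1 \<subseteq> K"
    by (rule submod_prod_least[OF K Z(1)]) (use assms(2) subringE(2,6,7)[OF assms(1)] in auto)
  show "K \<subseteq> submod_prod R K Z1"
  proof
    fix k assume k: "k \<in> K"
    have "k \<otimes> z \<in> submod_prod R K Z1" if "z \<in> submod_prod R Z1 Z2" for z
      using that Z
    proof (induction rule: submod_prod_induct)
      case zero
      then show ?case using k K zero_in_submod_prod by auto
    next
      case (step x y w)
      have "k \<otimes> (x \<otimes> y \<oplus> w) = (k \<otimes> y) \<otimes> x \<oplus> k \<otimes> w"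
        using step Z submod_prod_carrier[OF Z] k K by (auto dest!: subsetD) algebra
      moreover have "k \<otimes> y \<in> K" using subringE(6)[OF assms(1) k] step(2) assms(3) by auto
      ultimately show ?case using submod_prod_add_mult[OF K Z(1) _ step(1,4)] by simp
    qed
    from this[OF assms(4)] show "k \<in> submod_prod R K Z1" using k K by auto
  qed
qed

lemma invertible_ideal_submod_prod:
  assumes K: "subring K R" and L: "invertible_ideal R K L" and M: "invertible_ideal R K M"
  shows "invertible_ideal R K (submod_prod R L M)"
proof -
  have Kc: "K \<subseteq> carrier R" using subringE(1)[OF K] .
  obtain L' M' where L': "R_submod R K L'" "submod_prod R L L' = K"
    and M': "R_submod R K M'" "submod_prod R M M' = K"
    and Ls: "R_submod R K L" and Ms: "R_submod R K M"
    using L M unfolding invertible_ideal_def by auto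
  have c: "L \<subseteq> carrier R" "M \<subseteq> carrier R" "L' \<subseteq> carrier R" "M' \<subseteq> carrier R"
    using Ls Ms L' M' R_submod_carrier by auto
  note assoc = submod_prod_assoc and pc = submod_prod_carrier
  have "submod_prod R (submod_prod R L M) (submod_prod R L' M')
      = submod_prod R L (submod_prod R (submod_prod R M L') M')"
    using assoc[OF c(1,2) pc[OF c(3,4)]] assoc[OF c(2,3,4)] by simp
  also have "submod_prod R (submod_prod R M L') M' = submod_prod R L' (submod_prod R M M')"
    using submod_prod_comm[OF c(2,3)] assoc[OF c(3,2,4)] by simp
  also have "\<dots> = L'"
    using M'(2) submod_prod_comm[OF c(3) Kc] submod_prod_subring_left[OF K L'(1)] by simp
  finally have "submod_prod R (submod_prod R L M) (submod_prod R L' M') = K" using L'(2) by simp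
  then show ?thesis unfolding invertible_ideal_def
    using R_submod_submod_prod[OF Ls c(2) Kc] R_submod_submod_prod[OF L'(1) c(4) Kc] by auto
qed

lemma Inv_group_carrier_R_submod: "M \<in> carrier (Inv_group R K) \<Longrightarrow> R_submod R K M"
  unfolding Inv_group_def invertible_ideal_def by simp

lemma Inv_group_carrier_subset: "M \<in> carrier (Inv_group R K) \<Longrightarrow> M \<subseteq> carrier R"
  using Inv_group_carrier_R_submod R_submod_carrier by blast

lemma Inv_group_carrier_inverse:
  assumes "M \<in> carrier (Inv_group R K)"
  obtains M' where "M' \<in> carrier (Inv_group R K)" "submod_prod R M M' = K"
proof -
  obtain M' where M': "R_submod R K M'" "submod_prod R M M' = K" and Ms: "R_submod R K M"
    using assms unfolding Inv_group_def invertible_ideal_def by auto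
  have "submod_prod R M' M = K" using submod_prod_comm M' Ms R_submod_carrier by metis
  then have "M' \<in> carrier (Inv_group R K)" using M' Ms unfolding Inv_group_def invertible_ideal_def by auto
  then show ?thesis using that M' by blast
qed

lemma comm_group_Inv_group:
  assumes K: "subring K R"
  shows "comm_group (Inv_group R K)"
proof (rule comm_groupI)
  fix x y z
  assume x: "x \<in> carrier (Inv_group R K)" and y: "y \<in> carrier (Inv_group R K)"
  have c: "x \<subseteq> carrier R" "y \<subseteq> carrier R" using x y Inv_group_carrier_subset by auto
  show "x \<otimes>\<^bsub>Inv_group R K\<^esub> y \<in> carrier (Inv_group R K)"
    using x y invertible_ideal_submod_prod[OF K] by (simp add: Inv_group_def)
  show "x \<otimes>\<^bsub>Inv_group R K\<^esub> y = y \<otimes>\<^bsub>Inv_group R K\<^esub> x"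
    using submod_prod_comm[OF c] by (simp add: Inv_group_def)
  show "\<one>\<^bsub>Inv_group R K\<^esub> \<otimes>\<^bsub>Inv_group R K\<^esub> x = x"
    using submod_prod_subring_left[OF K Inv_group_carrier_R_submod[OF x]] by (simp add: Inv_group_def)
  obtain x' where x': "x' \<in> carrier (Inv_group R K)" "submod_prod R x x' = K"
    using Inv_group_carrier_inverse[OF x] .
  then show "\<exists>y\<in>carrier (Inv_group R K). y \<otimes>\<^bsub>Inv_group R K\<^esub> x = \<one>\<^bsub>Inv_group R K\<^esub>"
    using submod_prod_comm[OF c(1) Inv_group_carrier_subset[OF x'(1)]]
    by (intro bexI[of _ x']) (auto simp: Inv_group_def)
  assume "z \<in> carrier (Inv_group R K)"
  then show "x \<otimes>\<^bsub>Inv_group R K\<^esub> y \<otimes>\<^bsub>Inv_group R K\<^esub> z =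
       x \<otimes>\<^bsub>Inv_group R K\<^esub> (y \<otimes>\<^bsub>Inv_group R K\<^esub> z)"
    using submod_prod_assoc[OF c Inv_group_carrier_subset] by (simp add: Inv_group_def)
next
  show "\<one>\<^bsub>Inv_group R K\<^esub> \<in> carrier (Inv_group R K)"
    unfolding Inv_group_def invertible_ideal_def
    using R_submod_subring[OF K] submod_prod_subring_left[OF K R_submod_subring[OF K]] by auto
qed

lemma Inv_group_inv_eq:
  assumes K: "subring K R" and M: "M \<in> carrier (Inv_group R K)" and N: "N \<in> carrier (Inv_group R K)"
    and MN: "submod_prod R M N = K"
  shows "inv\<^bsub>Inv_group R K\<^esub> M = N"
proof -
  interpret G: comm_group "Inv_group R K" by (rule comm_group_Inv_group[OF K])
  have "N \<otimes>\<^bsub>Inv_group R K\<^esub> M = \<one>\<^bsub>Inv_group R K\<^esub>"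
    using MN G.m_comm[OF M N] by (simp add: Inv_group_def)
  then show ?thesis using G.inv_equality[OF _ M N] by simp
qed

end
section \<open>Principal submodules\<close>

text \<open>The principal submodule \<open>K x\<close> is the right coset \<open>K #> x\<close> of the multiplicative monoid,
  and \<open>u <# Z\<close> is the set \<open>u Z\<close>.\<close>

context cring
begin

lemma r_coset_ring_eq: "K #> x = {r \<otimes> x | r. r \<in> K}"
  unfolding r_coset_def by auto

lemma l_coset_ring_eq: "u <# Z = (\<lambda>z. u \<otimes> z) ` Z"
  unfolding l_coset_def by auto

lemma principal_ideals_eq: "principal_ideals R K = (\<lambda>u. K #> u) ` Units R"
  unfolding principal_ideals_def r_coset_ring_eq by auto

lemma l_coset_subset_carrier: "u \<in> carrier R \<Longrightarrow> Z \<subseteq> carrier R \<Longrightarrow> u <# Z \<subseteq> carrier R"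
  unfolding l_coset_ring_eq by auto

lemma l_coset_memI: "x \<in> Z \<Longrightarrow> u \<otimes> x \<in> u <# Z"
  unfolding l_coset_ring_eq by auto

lemma l_coset_mono: "Z1 \<subseteq> Z2 \<Longrightarrow> u <# Z1 \<subseteq> u <# Z2"
  unfolding l_coset_ring_eq by auto

lemma r_coset_eq_l_coset: "K \<subseteq> carrier R \<Longrightarrow> u \<in> carrier R \<Longrightarrow> K #> u = u <# K"
  unfolding r_coset_ring_eq l_coset_ring_eq by (auto intro: m_comm)

lemma l_coset_l_coset:
  "u \<in> carrier R \<Longrightarrow> v \<in> carrier R \<Longrightarrow> Z \<subseteq> carrier R \<Longrightarrow> u <# (v <# Z) = (u \<otimes> v) <# Z"
  unfolding l_coset_ring_eq image_image by (auto simp: m_assoc intro!: image_cong)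

lemma l_coset_one: "Z \<subseteq> carrier R \<Longrightarrow> \<one> <# Z = Z"
  unfolding l_coset_ring_eq by (auto intro!: image_eqI)

lemma l_coset_inv_cancel: "u \<in> Units R \<Longrightarrow> Z \<subseteq> carrier R \<Longrightarrow> inv u <# (u <# Z) = Z"
  using l_coset_l_coset[of "inv u" u Z] l_coset_one by auto

lemma l_coset_cancel_inv: "u \<in> Units R \<Longrightarrow> Z \<subseteq> carrier R \<Longrightarrow> u <# (inv u <# Z) = Z"
  using l_coset_l_coset[of u "inv u" Z] l_coset_one by auto

lemma inv_mult_Units:
  assumes "u \<in> Units R" "v \<in> Units R"
  shows "inv (u \<otimes> v) = inv u \<otimes> inv v"
proof -
  have c: "u \<in> carrier R" "v \<in> carrier R" "inv u \<in> carrier R" "inv v \<in> carrier R" using assms by auto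
  have "(u \<otimes> v) \<otimes> (inv u \<otimes> inv v) = (u \<otimes> inv u) \<otimes> (v \<otimes> inv v)" using c by (simp add: m_ac)
  also have "\<dots> = \<one>" using assms by simp
  finally show ?thesis using comm_inv_char[of "u \<otimes> v" "inv u \<otimes> inv v"] c by simp
qed

lemma l_coset_inv_subset:
  assumes "K \<subseteq> carrier R" "u \<in> Units R" "Z \<subseteq> K #> u"
  shows "inv u <# Z \<subseteq> K"
proof -
  have "Z \<subseteq> u <# K" using assms r_coset_eq_l_coset[OF assms(1) Units_closed[OF assms(2)]] by auto
  then have "inv u <# Z \<subseteq> inv u <# (u <# K)" by (rule l_coset_mono)
  then show ?thesis using l_coset_inv_cancel[OF assms(2,1)] by simp
qed

lemma l_coset_self: "u \<in> carrier R \<Longrightarrow> \<one> \<in> K \<Longrightarrow> u \<in> u <# K"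
  using l_coset_memI[of \<one> K u] by simp

lemma submod_prod_l_coset:
  assumes u: "u \<in> carrier R" and Z1: "Z1 \<subseteq> carrier R" and Z2: "Z2 \<subseteq> carrier R"
  shows "submod_prod R (u <# Z1) Z2 = u <# submod_prod R Z1 Z2"
proof
  have uZ1: "u <# Z1 \<subseteq> carrier R" using l_coset_subset_carrier u Z1 by auto
  have Z12: "submod_prod R Z1 Z2 \<subseteq> carrier R" using submod_prod_carrier[OF Z1 Z2] .
  show "submod_prod R (u <# Z1) Z2 \<subseteq> u <# submod_prod R Z1 Z2"
  proof (rule submod_prod_least[OF uZ1 Z2])
    show "\<zero> \<in> u <# submod_prod R Z1 Z2"
      using l_coset_memI[OF zero_in_submod_prod, of u Z1 Z2] u by simp
    fix a b assume "a \<in> u <# submod_prod R Z1 Z2" "b \<in> u <# submod_prod R Z1 Z2"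
    then obtain a' b' where ab: "a' \<in> submod_prod R Z1 Z2" "b' \<in> submod_prod R Z1 Z2"
      "a = u \<otimes> a'" "b = u \<otimes> b'"
      unfolding l_coset_ring_eq by auto
    moreover have "a' \<in> carrier R" "b' \<in> carrier R" using ab(1,2) Z12 by auto
    ultimately have "a \<oplus> b = u \<otimes> (a' \<oplus> b')" using u by (simp add: r_distr)
    then show "a \<oplus> b \<in> u <# submod_prod R Z1 Z2"
      using l_coset_memI[OF submod_prod_add_closed[OF Z1 Z2 ab(1,2)]] by simp
  next
    fix x y assume "x \<in> u <# Z1" "y \<in> Z2"
    then obtain x' where x': "x' \<in> Z1" "x = u \<otimes> x'" "y \<in> Z2" unfolding l_coset_ring_eq by auto
    moreover have "x' \<in> carrier R" "y \<in> carrier R" using x' Z1 Z2 by auto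
    ultimately have "x \<otimes> y = u \<otimes> (x' \<otimes> y)" using u by (simp add: m_assoc)
    then show "x \<otimes> y \<in> u <# submod_prod R Z1 Z2"
      using l_coset_memI[OF mult_in_submod_prod[OF Z1 Z2 x'(1,3)]] by simp
  qed
  have "u \<otimes> w \<in> submod_prod R (u <# Z1) Z2" if "w \<in> submod_prod R Z1 Z2" for w
    using that Z1 Z2
  proof (induction rule: submod_prod_induct)
    case zero
    then show ?case using zero_in_submod_prod u by simp
  next
    case (step x y w')
    have "u \<otimes> (x \<otimes> y \<oplus> w') = (u \<otimes> x) \<otimes> y \<oplus> u \<otimes> w'"
      using step Z1 Z2 Z12 u by (auto dest!: subsetD) algebra
    then show ?case using submod_prod_add_mult[OF uZ1 Z2 l_coset_memI[OF step(1)] step(2,4)] by simp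
  qed
  then show "u <# submod_prod R Z1 Z2 \<subseteq> submod_prod R (u <# Z1) Z2"
    unfolding l_coset_ring_eq by auto
qed

lemma submod_prod_l_coset_l_coset:
  assumes "u \<in> carrier R" "v \<in> carrier R" "Z1 \<subseteq> carrier R" "Z2 \<subseteq> carrier R"
  shows "submod_prod R (u <# Z1) (v <# Z2) = (u \<otimes> v) <# submod_prod R Z1 Z2"
proof -
  have vZ2: "v <# Z2 \<subseteq> carrier R" using l_coset_subset_carrier[OF assms(2,4)] .
  have "submod_prod R (u <# Z1) (v <# Z2) = u <# submod_prod R (v <# Z2) Z1"
    using submod_prod_l_coset[OF assms(1,3) vZ2] submod_prod_comm[OF assms(3) vZ2] by simp
  also have "submod_prod R (v <# Z2) Z1 = v <# submod_prod R Z1 Z2"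
    using submod_prod_l_coset[OF assms(2,4,3)] submod_prod_comm[OF assms(4,3)] by simp
  finally show ?thesis using l_coset_l_coset[OF assms(1,2) submod_prod_carrier[OF assms(3,4)]] by simp
qed

lemma R_submod_l_coset:
  assumes Z: "R_submod R K Z" and u: "u \<in> carrier R" and K: "K \<subseteq> carrier R"
  shows "R_submod R K (u <# Z)"
  unfolding R_submod_def
proof (intro conjI ballI)
  have Zc: "Z \<subseteq> carrier R" using R_submod_carrier[OF Z] .
  show "u <# Z \<subseteq> carrier R" using l_coset_subset_carrier u Zc by auto
  show "\<zero> \<in> u <# Z" using l_coset_memI[of \<zero> Z u] Z u unfolding R_submod_def by simp
  fix a b assume "a \<in> u <# Z" "b \<in> u <# Z"
  then obtain a' b' where ab: "a' \<in> Z" "b' \<in> Z" "a = u \<otimes> a'" "b = u \<otimes> b'"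
    unfolding l_coset_ring_eq by auto
  moreover have "a' \<in> carrier R" "b' \<in> carrier R" using ab(1,2) Zc by auto
  ultimately have "a \<oplus> b = u \<otimes> (a' \<oplus> b')" using u by (simp add: r_distr)
  moreover have "a' \<oplus> b' \<in> Z" using ab Z unfolding R_submod_def by auto
  ultimately show "a \<oplus> b \<in> u <# Z" using l_coset_memI by simp
next
  fix r b assume "r \<in> K" "b \<in> u <# Z"
  then obtain b' where rb: "r \<in> K" "b' \<in> Z" "b = u \<otimes> b'" unfolding l_coset_ring_eq by auto
  moreover have "r \<in> carrier R" "b' \<in> carrier R" using rb R_submod_carrier[OF Z] K by auto
  ultimately have "r \<otimes> b = u \<otimes> (r \<otimes> b')" using u by (simp add: m_lcomm)
  moreover have "r \<otimes> b' \<in> Z" using rb Z unfolding R_submod_def by auto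
  ultimately show "r \<otimes> b \<in> u <# Z" using l_coset_memI by simp
qed

lemma R_submod_r_coset:
  assumes "subring K R" "x \<in> carrier R"
  shows "R_submod R K (K #> x)"
  using R_submod_l_coset[OF R_submod_subring[OF assms(1)] assms(2) subringE(1)[OF assms(1)]]
    r_coset_eq_l_coset[OF subringE(1)[OF assms(1)] assms(2)] by simp

lemma r_coset_one_subring: "subring K R \<Longrightarrow> K #> \<one> = K"
  using r_coset_eq_l_coset[of K \<one>] l_coset_one[of K] by (simp add: subringE(1))

lemma submod_prod_r_coset:
  assumes K: "subring K R" and x: "x \<in> carrier R" and y: "y \<in> carrier R"
  shows "submod_prod R (K #> x) (K #> y) = K #> (x \<otimes> y)"
proof -
  have Kc: "K \<subseteq> carrier R" using subringE(1)[OF K] .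
  have "submod_prod R (x <# K) (y <# K) = x <# (y <# submod_prod R K K)"
    using submod_prod_l_coset[OF x Kc l_coset_subset_carrier[OF y Kc]]
      submod_prod_comm[OF Kc l_coset_subset_carrier[OF y Kc]] submod_prod_l_coset[OF y Kc Kc]
    by simp
  also have "submod_prod R K K = K"
    using submod_prod_subring_left[OF K R_submod_subring[OF K]] .
  finally show ?thesis using r_coset_eq_l_coset[OF Kc] l_coset_l_coset[OF x y Kc] x y by simp
qed

lemma submod_prod_subring_r_coset:
  assumes "subring K R" "subring K' R" "K' \<subseteq> K" "y \<in> carrier R"
  shows "submod_prod R K (K' #> y) = K #> y"
proof -
  have K: "K \<subseteq> carrier R" "K' \<subseteq> carrier R" using assms subringE(1) by auto
  have "submod_prod R K (K' #> y) = y <# submod_prod R K' K"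
    using submod_prod_comm[OF K(1) l_coset_subset_carrier[OF assms(4) K(2)]]
      r_coset_eq_l_coset[OF K(2) assms(4)] submod_prod_l_coset[OF assms(4) K(2,1)] by simp
  also have "submod_prod R K' K = K"
    using submod_prod_comm[OF K(2,1)] submod_prod_subring_absorb[OF assms(1-3)] by simp
  finally show ?thesis using r_coset_eq_l_coset[OF K(1) assms(4)] by simp
qed

lemma r_coset_Units_eq_D:
  assumes K: "subring K R" and u: "u \<in> Units R" "u' \<in> Units R" and e: "K #> u = K #> u'"
  shows "\<exists>w\<in>K. \<exists>w'\<in>K. u' = w \<otimes> u \<and> w' \<otimes> w = \<one>"
proof -
  have self: "x \<in> K #> x" if "x \<in> carrier R" for x
  proof -
    have "\<one> \<otimes> x \<in> K #> x" unfolding r_coset_ring_eq using subringE(3)[OF K] by blast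
    then show ?thesis using that by simp
  qed
  have "u' \<in> K #> u" "u \<in> K #> u'" using self[of u] self[of u'] u e by auto
  then obtain w w' where w: "w \<in> K" "u' = w \<otimes> u" "w' \<in> K" "u = w' \<otimes> u'"
    unfolding r_coset_ring_eq by blast
  have c: "w \<in> carrier R" "w' \<in> carrier R" "u \<in> carrier R" "inv u \<in> carrier R"
    using w u subringE(1)[OF K] by auto
  have "w' \<otimes> w = (w' \<otimes> w) \<otimes> (u \<otimes> inv u)" using c u by simp
  also have "\<dots> = (w' \<otimes> (w \<otimes> u)) \<otimes> inv u" using c by (simp add: m_assoc)
  also have "\<dots> = \<one>" using w(2,4) u by simp
  finally show ?thesis using w by blast
qed

lemma r_coset_Units_in_Inv_group:
  assumes K: "subring K R" and x: "x \<in> Units R"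
  shows "K #> x \<in> carrier (Inv_group R K)"
proof -
  have "submod_prod R (K #> x) (K #> inv x) = K"
    using submod_prod_r_coset[OF K, of x "inv x"] x r_coset_one_subring[OF K] by auto
  then show ?thesis unfolding Inv_group_def invertible_ideal_def
    using R_submod_r_coset[OF K, of x] R_submod_r_coset[OF K, of "inv x"] x by auto
qed

lemma Inv_group_inv_r_coset:
  assumes K: "subring K R" and u: "u \<in> Units R"
  shows "inv\<^bsub>Inv_group R K\<^esub> (K #> u) = K #> inv u"
proof (rule Inv_group_inv_eq[OF K])
  show "K #> u \<in> carrier (Inv_group R K)" "K #> inv u \<in> carrier (Inv_group R K)"
    using r_coset_Units_in_Inv_group[OF K] u by auto
  show "submod_prod R (K #> u) (K #> inv u) = K"
    using submod_prod_r_coset[OF K, of u "inv u"] u r_coset_one_subring[OF K] by auto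
qed

lemma subgroup_principal_ideals:
  assumes K: "subring K R"
  shows "subgroup (principal_ideals R K) (Inv_group R K)"
proof -
  interpret G: comm_group "Inv_group R K" by (rule comm_group_Inv_group[OF K])
  show ?thesis unfolding principal_ideals_eq
  proof (rule G.subgroupI)
    show "(\<lambda>u. K #> u) ` Units R \<subseteq> carrier (Inv_group R K)"
      using r_coset_Units_in_Inv_group[OF K] by auto
  next
    fix a assume "a \<in> (\<lambda>u. K #> u) ` Units R"
    then show "inv\<^bsub>Inv_group R K\<^esub> a \<in> (\<lambda>u. K #> u) ` Units R"
      using Inv_group_inv_r_coset[OF K] by auto
  next
    fix a b assume "a \<in> (\<lambda>u. K #> u) ` Units R" "b \<in> (\<lambda>u. K #> u) ` Units R"
    then show "a \<otimes>\<^bsub>Inv_group R K\<^esub> b \<in> (\<lambda>u. K #> u) ` Units R"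
      using submod_prod_r_coset[OF K] by (auto simp: Inv_group_def)
  qed blast
qed

lemma comm_group_Cart_group: "subring K R \<Longrightarrow> comm_group (Cart_group R K)"
  unfolding Cart_group_def
  by (rule comm_group.abelian_FactGroup[OF comm_group_Inv_group subgroup_principal_ideals])

end
section \<open>Submodules under ring homomorphisms\<close>

context ring_hom_cring
begin

lemma image_submod_prod:
  assumes Z1: "Z1 \<subseteq> carrier R" and Z2: "Z2 \<subseteq> carrier R"
  shows "h ` submod_prod R Z1 Z2 = submod_prod S (h ` Z1) (h ` Z2)"
proof
  have hZ: "h ` Z1 \<subseteq> carrier S" "h ` Z2 \<subseteq> carrier S" using Z1 Z2 by auto
  have "h w \<in> submod_prod S (h ` Z1) (h ` Z2)" if "w \<in> submod_prod R Z1 Z2" for w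
    using that Z1 Z2
  proof (induction rule: R.submod_prod_induct)
    case zero
    then show ?case using S.zero_in_submod_prod by simp
  next
    case (step x y w)
    have "h (x \<otimes> y \<oplus> w) = h x \<otimes>\<^bsub>S\<^esub> h y \<oplus>\<^bsub>S\<^esub> h w"
      using step Z1 Z2 R.submod_prod_carrier[OF Z1 Z2] by (auto dest!: subsetD)
    then show ?case using S.submod_prod_add_mult[OF hZ imageI[OF step(1)] imageI[OF step(2)] step(4)] by simp
  qed
  then show "h ` submod_prod R Z1 Z2 \<subseteq> submod_prod S (h ` Z1) (h ` Z2)" by auto
  show "submod_prod S (h ` Z1) (h ` Z2) \<subseteq> h ` submod_prod R Z1 Z2"
  proof
    fix z assume "z \<in> submod_prod S (h ` Z1) (h ` Z2)"
    then show "z \<in> h ` submod_prod R Z1 Z2" using hZ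
    proof (induction rule: S.submod_prod_induct)
      case zero
      then show ?case using R.zero_in_submod_prod by (auto intro!: image_eqI[of _ _ \<zero>])
    next
      case (step x y w)
      then obtain x' y' w' where xyw: "x' \<in> Z1" "y' \<in> Z2" "w' \<in> submod_prod R Z1 Z2"
        "x = h x'" "y = h y'" "w = h w'"
        by auto
      then have "x \<otimes>\<^bsub>S\<^esub> y \<oplus>\<^bsub>S\<^esub> w = h (x' \<otimes> y' \<oplus> w')"
        using Z1 Z2 R.submod_prod_carrier[OF Z1 Z2] by (auto dest!: subsetD)
      then show ?case using R.submod_prod_add_mult[OF Z1 Z2 xyw(1,2,3)] by auto
    qed
  qed
qed

lemma R_submod_image:
  assumes Z: "R_submod R K Z" and K: "K \<subseteq> carrier R"
  shows "R_submod S (h ` K) (h ` Z)"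
  unfolding R_submod_def
proof (intro conjI ballI)
  have Zc: "Z \<subseteq> carrier R" using R.R_submod_carrier[OF Z] .
  show "h ` Z \<subseteq> carrier S" using Zc by auto
  show "\<zero>\<^bsub>S\<^esub> \<in> h ` Z" using Z unfolding R_submod_def by (auto intro!: image_eqI[of _ _ \<zero>])
  fix a b assume "a \<in> h ` Z" "b \<in> h ` Z"
  then obtain a' b' where ab: "a' \<in> Z" "b' \<in> Z" "a = h a'" "b = h b'" by auto
  moreover have "a' \<in> carrier R" "b' \<in> carrier R" using ab(1,2) Zc by auto
  ultimately have "a \<oplus>\<^bsub>S\<^esub> b = h (a' \<oplus> b')" by simp
  moreover have "a' \<oplus> b' \<in> Z" using ab Z unfolding R_submod_def by auto
  ultimately show "a \<oplus>\<^bsub>S\<^esub> b \<in> h ` Z" by auto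
next
  fix a b assume "a \<in> h ` K" "b \<in> h ` Z"
  then obtain a' b' where ab: "a' \<in> K" "b' \<in> Z" "a = h a'" "b = h b'" by auto
  moreover have "a' \<in> carrier R" "b' \<in> carrier R" using ab(1,2) R.R_submod_carrier[OF Z] K by auto
  ultimately have "a \<otimes>\<^bsub>S\<^esub> b = h (a' \<otimes> b')" by simp
  moreover have "a' \<otimes> b' \<in> Z" using ab Z unfolding R_submod_def by auto
  ultimately show "a \<otimes>\<^bsub>S\<^esub> b \<in> h ` Z" by auto
qed

lemma R_submod_vimage:
  assumes K: "K \<subseteq> carrier R" and Z: "R_submod S (h ` K) Z"
  shows "R_submod R K {x \<in> carrier R. h x \<in> Z}"
  using Z K unfolding R_submod_def by (auto dest!: subsetD)

lemma vimage_Inv_group: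
  assumes inj: "inj_on h (carrier R)" and K: "K \<subseteq> carrier R"
    and M: "R_submod S (h ` K) M" "M \<subseteq> h ` carrier R"
    and N: "R_submod S (h ` K) N" "N \<subseteq> h ` carrier R"
    and MN: "submod_prod S M N = h ` K"
  shows "{x \<in> carrier R. h x \<in> M} \<in> carrier (Inv_group R K)"
proof -
  define L where "L = {x \<in> carrier R. h x \<in> M}"
  define L' where "L' = {x \<in> carrier R. h x \<in> N}"
  have c: "L \<subseteq> carrier R" "L' \<subseteq> carrier R" unfolding L_def L'_def by auto
  have "h ` L = M" "h ` L' = N" unfolding L_def L'_def using M(2) N(2) by auto
  then have "h ` submod_prod R L L' = h ` K" using image_submod_prod[OF c] MN by simp
  then have "submod_prod R L L' = K" using inj_on_image_eq_iff[OF inj R.submod_prod_carrier[OF c] K] by simp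
  moreover have "R_submod R K L" "R_submod R K L'"
    unfolding L_def L'_def using R_submod_vimage[OF K M(1)] R_submod_vimage[OF K N(1)] .
  ultimately have "L \<in> carrier (Inv_group R K)" unfolding Inv_group_def invertible_ideal_def by auto
  then show ?thesis unfolding L_def .
qed

lemma image_l_coset:
  assumes "u \<in> carrier R" "Z \<subseteq> carrier R"
  shows "h ` (u <#\<^bsub>R\<^esub> Z) = h u <#\<^bsub>S\<^esub> h ` Z"
  unfolding R.l_coset_ring_eq S.l_coset_ring_eq image_image using assms by (auto intro!: image_cong)

lemma image_r_coset:
  assumes "u \<in> carrier R" "K \<subseteq> carrier R"
  shows "h ` (K #>\<^bsub>R\<^esub> u) = h ` K #>\<^bsub>S\<^esub> h u"
proof -
  have "h ` K \<subseteq> carrier S" using assms(2) by auto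
  then show ?thesis using image_l_coset[OF assms] R.r_coset_eq_l_coset[OF assms(2,1)]
      S.r_coset_eq_l_coset[of "h ` K" "h u"] assms(1) by simp
qed

lemma hom_Units:
  assumes "u \<in> Units R"
  shows "h u \<in> Units S" "h (inv u) = inv\<^bsub>S\<^esub> (h u)"
proof -
  have c: "u \<in> carrier R" "inv u \<in> carrier R" using assms by auto
  have e: "h u \<otimes>\<^bsub>S\<^esub> h (inv u) = \<one>\<^bsub>S\<^esub>" using c assms
    by (metis R.Units_r_inv hom_mult hom_one)
  then show "h u \<in> Units S" unfolding Units_def using c S.m_comm by (auto intro!: bexI[of _ "h (inv u)"])
  show "h (inv u) = inv\<^bsub>S\<^esub> (h u)" using S.comm_inv_char[OF _ _ e] c by simp
qed

end
section \<open>The total ring of fractions\<close>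

context cring
begin

lemma nzd_one: "nzd R \<one>"
  unfolding nzd_def by simp

lemma nzd_carrier: "nzd R s \<Longrightarrow> s \<in> carrier R"
  unfolding nzd_def by simp

lemma nzd_mult: assumes "nzd R s" "nzd R t" shows "nzd R (s \<otimes> t)"
  unfolding nzd_def
proof (intro conjI ballI impI)
  have s: "s \<in> carrier R" and t: "t \<in> carrier R" using assms nzd_carrier by auto
  then show "s \<otimes> t \<in> carrier R" by simp
  fix x assume x: "x \<in> carrier R" and "s \<otimes> t \<otimes> x = \<zero>"
  then have "s \<otimes> (t \<otimes> x) = \<zero>" using s t by (simp add: m_assoc)
  then have "t \<otimes> x = \<zero>" using assms(1) x t unfolding nzd_def by simp
  then show "x = \<zero>" using assms(2) x unfolding nzd_def by simp
qed

lemma nzd_cancel: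
  assumes "nzd R s" "a \<in> carrier R" "b \<in> carrier R" "s \<otimes> a = s \<otimes> b"
  shows "a = b"
proof -
  have s: "s \<in> carrier R" using assms nzd_carrier by auto
  have "s \<otimes> (a \<ominus> b) = s \<otimes> a \<ominus> s \<otimes> b" using assms s by algebra
  also have "\<dots> = \<zero>" using assms s by (simp add: r_neg)
  finally have "a \<ominus> b = \<zero>" using assms(1,2,3) unfolding nzd_def by simp
  then show ?thesis using assms(2,3) by simp
qed

lemma frac_altdef:
  "frac R a s = {(b,t). a \<in> carrier R \<and> b \<in> carrier R \<and> nzd R s \<and> nzd R t \<and> a \<otimes> t = b \<otimes> s}"
  unfolding frac_def frac_rel_def by auto

lemma frac_self: "a \<in> carrier R \<Longrightarrow> nzd R s \<Longrightarrow> (a, s) \<in> frac R a s"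
  unfolding frac_altdef using nzd_carrier by (auto simp: m_comm)

lemma frac_eq_iff:
  assumes "a \<in> carrier R" "nzd R s" "b \<in> carrier R" "nzd R t"
  shows "frac R a s = frac R b t \<longleftrightarrow> a \<otimes> t = b \<otimes> s"
proof
  assume "frac R a s = frac R b t"
  then have "(b, t) \<in> frac R a s" using frac_self assms by auto
  then show "a \<otimes> t = b \<otimes> s" unfolding frac_altdef by auto
next
  assume e: "a \<otimes> t = b \<otimes> s"
  have s: "s \<in> carrier R" and t: "t \<in> carrier R" using assms nzd_carrier by auto
  have "a \<otimes> u = c \<otimes> s \<longleftrightarrow> b \<otimes> u = c \<otimes> t" if "c \<in> carrier R" "nzd R u" for c u
  proof -
    have u: "u \<in> carrier R" using that nzd_carrier by auto
    have "a \<otimes> u = c \<otimes> s \<longleftrightarrow> t \<otimes> (a \<otimes> u) = t \<otimes> (c \<otimes> s)"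
      using nzd_cancel[OF assms(4)] assms u that s t by auto
    also have "t \<otimes> (a \<otimes> u) = s \<otimes> (b \<otimes> u)" using e assms s t u
      by (metis m_assoc m_comm)
    also have "t \<otimes> (c \<otimes> s) = s \<otimes> (c \<otimes> t)" using that s t u by (metis m_assoc m_comm)
    also have "s \<otimes> (b \<otimes> u) = s \<otimes> (c \<otimes> t) \<longleftrightarrow> b \<otimes> u = c \<otimes> t"
      using nzd_cancel[OF assms(2)] assms u that s t by auto
    finally show ?thesis .
  qed
  then show "frac R a s = frac R b t" unfolding frac_altdef using assms by auto
qed

lemma Tot_carrier: "carrier (Tot R) = {frac R a s | a s. a \<in> carrier R \<and> nzd R s}"
  unfolding Tot_def by simp

lemma Tot_one: "\<one>\<^bsub>Tot R\<^esub> = frac R \<one> \<one>"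
  unfolding Tot_def by simp

lemma Tot_zero: "\<zero>\<^bsub>Tot R\<^esub> = frac R \<zero> \<one>"
  unfolding Tot_def by simp

lemma frac_in_Tot: "a \<in> carrier R \<Longrightarrow> nzd R s \<Longrightarrow> frac R a s \<in> carrier (Tot R)"
  unfolding Tot_carrier by auto

lemma Tot_cases:
  assumes "x \<in> carrier (Tot R)"
  obtains a s where "a \<in> carrier R" "nzd R s" "x = frac R a s"
  using assms unfolding Tot_carrier by auto

text \<open>The operations of \<^const>\<open>Tot\<close> are unions over all representatives; they are well defined
  because every representative gives the same class.\<close>

lemma Union_over_representatives:
  assumes "a \<in> carrier R" "nzd R s" "b \<in> carrier R" "nzd R t"
    and "\<And>a' s' b' t'. (a', s') \<in> frac R a s \<Longrightarrow> (b', t') \<in> frac R b t \<Longrightarrow> F a' s' b' t' = F a s b t"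
  shows "\<Union>{F a' s' b' t' | a' s' b' t'. (a', s') \<in> frac R a s \<and> (b', t') \<in> frac R b t} = F a s b t"
proof -
  have "{F a' s' b' t' | a' s' b' t'. (a', s') \<in> frac R a s \<and> (b', t') \<in> frac R b t} = {F a s b t}"
    using assms(5) frac_self[OF assms(1,2)] frac_self[OF assms(3,4)] by blast
  then show ?thesis by simp
qed

lemma Tot_mult_frac:
  assumes "a \<in> carrier R" "nzd R s" "b \<in> carrier R" "nzd R t"
  shows "frac R a s \<otimes>\<^bsub>Tot R\<^esub> frac R b t = frac R (a \<otimes> b) (s \<otimes> t)"
proof -
  have s: "s \<in> carrier R" and t: "t \<in> carrier R" using assms nzd_carrier by auto
  have "frac R (a' \<otimes> b') (s' \<otimes> t') = frac R (a \<otimes> b) (s \<otimes> t)"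
    if "(a', s') \<in> frac R a s" "(b', t') \<in> frac R b t" for a' s' b' t'
  proof -
    from that have h: "a' \<in> carrier R" "nzd R s'" "b' \<in> carrier R" "nzd R t'"
      "a \<otimes> s' = a' \<otimes> s" "b \<otimes> t' = b' \<otimes> t" unfolding frac_altdef by auto
    have s': "s' \<in> carrier R" and t': "t' \<in> carrier R" using h nzd_carrier by auto
    have "a' \<otimes> b' \<otimes> (s \<otimes> t) = (a' \<otimes> s) \<otimes> (b' \<otimes> t)" using h s t by algebra
    also have "\<dots> = (a \<otimes> s') \<otimes> (b \<otimes> t')" using h by simp
    also have "\<dots> = a \<otimes> b \<otimes> (s' \<otimes> t')" using s' t' assms s t by algebra
    finally show ?thesis using frac_eq_iff h assms nzd_mult by auto
  qed
  then show ?thesis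
    using Union_over_representatives[OF assms, of "\<lambda>a s b t. frac R (a \<otimes> b) (s \<otimes> t)"]
    by (simp add: Tot_def)
qed

lemma Tot_add_frac:
  assumes "a \<in> carrier R" "nzd R s" "b \<in> carrier R" "nzd R t"
  shows "frac R a s \<oplus>\<^bsub>Tot R\<^esub> frac R b t = frac R (a \<otimes> t \<oplus> b \<otimes> s) (s \<otimes> t)"
proof -
  have s: "s \<in> carrier R" and t: "t \<in> carrier R" using assms nzd_carrier by auto
  have "frac R (a' \<otimes> t' \<oplus> b' \<otimes> s') (s' \<otimes> t') = frac R (a \<otimes> t \<oplus> b \<otimes> s) (s \<otimes> t)"
    if "(a', s') \<in> frac R a s" "(b', t') \<in> frac R b t" for a' s' b' t'
  proof -
    from that have h: "a' \<in> carrier R" "nzd R s'" "b' \<in> carrier R" "nzd R t'"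
      "a \<otimes> s' = a' \<otimes> s" "b \<otimes> t' = b' \<otimes> t" unfolding frac_altdef by auto
    have s': "s' \<in> carrier R" and t': "t' \<in> carrier R" using h nzd_carrier by auto
    have "(a' \<otimes> t' \<oplus> b' \<otimes> s') \<otimes> (s \<otimes> t) = (a' \<otimes> s) \<otimes> (t \<otimes> t') \<oplus> (b' \<otimes> t) \<otimes> (s \<otimes> s')"
      using h s t s' t' by algebra
    also have "\<dots> = (a \<otimes> s') \<otimes> (t \<otimes> t') \<oplus> (b \<otimes> t') \<otimes> (s \<otimes> s')" using h by simp
    also have "\<dots> = (a \<otimes> t \<oplus> b \<otimes> s) \<otimes> (s' \<otimes> t')" using s' t' s t assms by algebra
    finally show ?thesis using frac_eq_iff h assms nzd_mult s t s' t' by auto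
  qed
  then show ?thesis
    using Union_over_representatives[OF assms, of "\<lambda>a s b t. frac R (a \<otimes> t \<oplus> b \<otimes> s) (s \<otimes> t)"]
    by (simp add: Tot_def)
qed

lemma abelian_group_Tot: "abelian_group (Tot R)"
proof (rule abelian_groupI)
  fix x y z
  assume x: "x \<in> carrier (Tot R)" and y: "y \<in> carrier (Tot R)"
  obtain a s where a: "a \<in> carrier R" "nzd R s" "x = frac R a s" using x by (rule Tot_cases)
  obtain b t where b: "b \<in> carrier R" "nzd R t" "y = frac R b t" using y by (rule Tot_cases)
  have s: "s \<in> carrier R" and t: "t \<in> carrier R" using a b nzd_carrier by auto
  show "x \<oplus>\<^bsub>Tot R\<^esub> y \<in> carrier (Tot R)"
    using a b s t by (simp add: Tot_add_frac frac_in_Tot nzd_mult)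
  show "x \<oplus>\<^bsub>Tot R\<^esub> y = y \<oplus>\<^bsub>Tot R\<^esub> x"
    using a b s t by (simp add: Tot_add_frac frac_eq_iff nzd_mult) algebra
  assume z: "z \<in> carrier (Tot R)"
  obtain c u where c: "c \<in> carrier R" "nzd R u" "z = frac R c u" using z by (rule Tot_cases)
  have u: "u \<in> carrier R" using c nzd_carrier by auto
  show "x \<oplus>\<^bsub>Tot R\<^esub> y \<oplus>\<^bsub>Tot R\<^esub> z = x \<oplus>\<^bsub>Tot R\<^esub> (y \<oplus>\<^bsub>Tot R\<^esub> z)"
    using a b c s t u by (simp add: Tot_add_frac frac_eq_iff nzd_mult) algebra
next
  show "\<zero>\<^bsub>Tot R\<^esub> \<in> carrier (Tot R)" unfolding Tot_zero by (simp add: frac_in_Tot nzd_one)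
next
  fix x assume x: "x \<in> carrier (Tot R)"
  obtain a s where a: "a \<in> carrier R" "nzd R s" "x = frac R a s" using x by (rule Tot_cases)
  have s: "s \<in> carrier R" using a nzd_carrier by auto
  show "\<zero>\<^bsub>Tot R\<^esub> \<oplus>\<^bsub>Tot R\<^esub> x = x"
    using a s unfolding Tot_zero by (simp add: Tot_add_frac frac_eq_iff nzd_mult nzd_one) algebra
  have "frac R (\<ominus> a) s \<oplus>\<^bsub>Tot R\<^esub> x = \<zero>\<^bsub>Tot R\<^esub>"
    using a s unfolding Tot_zero by (simp add: Tot_add_frac frac_eq_iff nzd_mult nzd_one) algebra
  then show "\<exists>y\<in>carrier (Tot R). y \<oplus>\<^bsub>Tot R\<^esub> x = \<zero>\<^bsub>Tot R\<^esub>"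
    using a by (intro bexI[of _ "frac R (\<ominus> a) s"]) (auto intro: frac_in_Tot)
qed

lemma comm_monoid_Tot: "comm_monoid (Tot R)"
proof (rule comm_monoidI)
  fix x y z
  assume x: "x \<in> carrier (Tot R)" and y: "y \<in> carrier (Tot R)"
  obtain a s where a: "a \<in> carrier R" "nzd R s" "x = frac R a s" using x by (rule Tot_cases)
  obtain b t where b: "b \<in> carrier R" "nzd R t" "y = frac R b t" using y by (rule Tot_cases)
  have s: "s \<in> carrier R" and t: "t \<in> carrier R" using a b nzd_carrier by auto
  show "x \<otimes>\<^bsub>Tot R\<^esub> y \<in> carrier (Tot R)"
    using a b s t by (simp add: Tot_mult_frac frac_in_Tot nzd_mult)
  show "x \<otimes>\<^bsub>Tot R\<^esub> y = y \<otimes>\<^bsub>Tot R\<^esub> x"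
    using a b s t by (simp add: Tot_mult_frac frac_eq_iff nzd_mult) algebra
  assume z: "z \<in> carrier (Tot R)"
  obtain c u where c: "c \<in> carrier R" "nzd R u" "z = frac R c u" using z by (rule Tot_cases)
  have u: "u \<in> carrier R" using c nzd_carrier by auto
  show "x \<otimes>\<^bsub>Tot R\<^esub> y \<otimes>\<^bsub>Tot R\<^esub> z = x \<otimes>\<^bsub>Tot R\<^esub> (y \<otimes>\<^bsub>Tot R\<^esub> z)"
    using a b c s t u by (simp add: Tot_mult_frac frac_eq_iff nzd_mult) algebra
next
  show "\<one>\<^bsub>Tot R\<^esub> \<in> carrier (Tot R)" unfolding Tot_one by (simp add: frac_in_Tot nzd_one)
next
  fix x assume "x \<in> carrier (Tot R)"
  then obtain a s where a: "a \<in> carrier R" "nzd R s" "x = frac R a s" by (rule Tot_cases)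
  then show "\<one>\<^bsub>Tot R\<^esub> \<otimes>\<^bsub>Tot R\<^esub> x = x"
    using nzd_carrier unfolding Tot_one by (simp add: Tot_mult_frac frac_eq_iff nzd_mult nzd_one)
qed

lemma cring_Tot: "cring (Tot R)"
proof (rule cringI[OF abelian_group_Tot comm_monoid_Tot])
  fix x y z
  assume "x \<in> carrier (Tot R)" "y \<in> carrier (Tot R)" "z \<in> carrier (Tot R)"
  then obtain a s b t c u where a: "a \<in> carrier R" "nzd R s" "x = frac R a s"
    and b: "b \<in> carrier R" "nzd R t" "y = frac R b t" and c: "c \<in> carrier R" "nzd R u" "z = frac R c u"
    by (metis Tot_cases)
  have s: "s \<in> carrier R" and t: "t \<in> carrier R" and u: "u \<in> carrier R" using a b c nzd_carrier by auto
  show "(x \<oplus>\<^bsub>Tot R\<^esub> y) \<otimes>\<^bsub>Tot R\<^esub> z = x \<otimes>\<^bsub>Tot R\<^esub> z \<oplus>\<^bsub>Tot R\<^esub> y \<otimes>\<^bsub>Tot R\<^esub> z"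
    using a b c s t u by (simp add: Tot_mult_frac Tot_add_frac frac_eq_iff nzd_mult) algebra
qed

lemma frac_one_ring_hom: "(\<lambda>a. frac R a \<one>) \<in> ring_hom R (Tot R)"
  by (rule ring_hom_memI) (simp_all add: frac_in_Tot nzd_one Tot_mult_frac Tot_add_frac Tot_one)

lemma frac_one_eq_iff: "a \<in> carrier R \<Longrightarrow> b \<in> carrier R \<Longrightarrow> frac R a \<one> = frac R b \<one> \<longleftrightarrow> a = b"
  by (simp add: frac_eq_iff nzd_one)

lemma canon_eq_image: "canon R = (\<lambda>a. frac R a \<one>) ` carrier R"
  unfolding canon_def by auto

lemma subring_canon: "subring (canon R) (Tot R)"
proof -
  interpret T: cring "Tot R" by (rule cring_Tot)
  interpret h: ring_hom_ring R "Tot R" "\<lambda>a. frac R a \<one>"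
    by (intro ring_hom_ringI2 ring_axioms T.ring_axioms frac_one_ring_hom)
  show ?thesis unfolding canon_eq_image using h.img_is_subring[OF carrier_is_subring] .
qed

end
section \<open>Invertible submodules over a von Neumann regular subring\<close>

definition vN_regular :: "('a, 'm) ring_scheme \<Rightarrow> 'a set \<Rightarrow> bool" where
  "vN_regular R K \<longleftrightarrow> (\<forall>x\<in>K. \<exists>y\<in>K. x = x \<otimes>\<^bsub>R\<^esub> x \<otimes>\<^bsub>R\<^esub> y)"

context cring
begin

lemma idempotent_glue_mult:
  assumes c: "u \<in> carrier R" "v \<in> carrier R" "m \<in> carrier R" "m' \<in> carrier R" "f \<in> carrier R"
    and ff: "f \<otimes> f = f" and fz: "f \<otimes> (u \<otimes> v) = u \<otimes> v"
  shows "(f \<otimes> u \<oplus> (\<one> \<ominus> f) \<otimes> m) \<otimes> (f \<otimes> v \<oplus> (\<one> \<ominus> f) \<otimes> m')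
       = u \<otimes> v \<oplus> (\<one> \<ominus> f) \<otimes> (m \<otimes> m')"
proof -
  have e1: "f \<otimes> (\<one> \<ominus> f) = \<zero>" using c ff by algebra
  have e2: "(\<one> \<ominus> f) \<otimes> (\<one> \<ominus> f) = \<one> \<ominus> f" using c ff by algebra
  have "(f \<otimes> u \<oplus> (\<one> \<ominus> f) \<otimes> m) \<otimes> (f \<otimes> v \<oplus> (\<one> \<ominus> f) \<otimes> m')
    = (f \<otimes> f) \<otimes> (u \<otimes> v) \<oplus> (f \<otimes> (\<one> \<ominus> f)) \<otimes> (u \<otimes> m' \<oplus> m \<otimes> v) \<oplus> ((\<one> \<ominus> f) \<otimes> (\<one> \<ominus> f)) \<otimes> (m \<otimes> m')"
    using c by algebra
  also have "\<dots> = u \<otimes> v \<oplus> (\<one> \<ominus> f) \<otimes> (m \<otimes> m')"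
    unfolding e1 e2 ff fz using c by simp
  finally show ?thesis .
qed

lemma idempotent_glue_factor:
  assumes c: "z \<in> carrier R" "y \<in> carrier R" "c \<in> carrier R" "w \<in> carrier R" "w' \<in> carrier R"
    and f: "f = z \<otimes> w" and ff: "f \<otimes> f = f" and fz: "f \<otimes> z = z"
    and g: "g = ((\<one> \<ominus> f) \<otimes> y) \<otimes> w'" and gy: "g \<otimes> ((\<one> \<ominus> f) \<otimes> y) = (\<one> \<ominus> f) \<otimes> y"
  shows "y \<oplus> c \<otimes> z = ((c \<oplus> w \<otimes> y) \<otimes> f \<oplus> g) \<otimes> (z \<oplus> (\<one> \<ominus> f) \<otimes> y)"
proof -
  have fc: "f \<in> carrier R" "g \<in> carrier R" using c f g by auto
  have e1: "f \<otimes> (\<one> \<ominus> f) = \<zero>" using fc ff by algebra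
  have "g \<otimes> z = ((\<one> \<ominus> f) \<otimes> z) \<otimes> (y \<otimes> w')" unfolding g using c fc by algebra
  also have "(\<one> \<ominus> f) \<otimes> z = \<zero>" using c fc fz by algebra
  finally have e3: "g \<otimes> z = \<zero>" using c by simp
  have "((c \<oplus> w \<otimes> y) \<otimes> f \<oplus> g) \<otimes> (z \<oplus> (\<one> \<ominus> f) \<otimes> y)
     = (c \<oplus> w \<otimes> y) \<otimes> (f \<otimes> z) \<oplus> (c \<oplus> w \<otimes> y) \<otimes> y \<otimes> (f \<otimes> (\<one> \<ominus> f)) \<oplus> g \<otimes> z \<oplus> g \<otimes> ((\<one> \<ominus> f) \<otimes> y)"
    using c fc by algebra
  also have "\<dots> = (c \<oplus> w \<otimes> y) \<otimes> z \<oplus> (\<one> \<ominus> f) \<otimes> y"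
    unfolding fz e1 e3 gy using c fc by simp
  also have "\<dots> = y \<oplus> c \<otimes> z" unfolding f using c by algebra
  finally show ?thesis by simp
qed

lemma vN_regular_idempotent:
  assumes "subring K R" "vN_regular R K" "z \<in> K"
  obtains w where "w \<in> K" "z \<otimes> w \<in> K" "(z \<otimes> w) \<otimes> (z \<otimes> w) = z \<otimes> w" "(z \<otimes> w) \<otimes> z = z"
proof -
  obtain w where w: "w \<in> K" "z = z \<otimes> z \<otimes> w" using assms unfolding vN_regular_def by blast
  have c: "z \<in> carrier R" "w \<in> carrier R" using w assms subringE(1) by auto
  have fz: "(z \<otimes> w) \<otimes> z = z" using w(2) c by (metis m_assoc m_comm m_closed)
  then have "(z \<otimes> w) \<otimes> (z \<otimes> w) = z \<otimes> w" using c by (metis m_assoc m_closed)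
  then show ?thesis using that w fz subringE(6)[OF assms(1,3) w(1)] by blast
qed

text \<open>In a sum \<open>m m' + c u v\<close> of two products, pick an idempotent \<open>f\<close> of \<open>K\<close> with \<open>f (u v) = u v\<close>.
  Gluing \<open>u, v\<close> on the \<open>f\<close>-component with \<open>m, m'\<close> on the \<open>(1 - f)\<close>-component gives a single
  product \<open>u' v'\<close> which is a \<open>K\<close>-multiple of the sum.\<close>

lemma vN_regular_sum_of_products:
  assumes K: "subring K R" "vN_regular R K"
    and M: "R_submod R K M" and M': "R_submod R K M'" and MM': "\<And>a b. a \<in> M \<Longrightarrow> b \<in> M' \<Longrightarrow> a \<otimes> b \<in> K"
    and uvc: "u \<in> M" "v \<in> M'" "c \<in> K" and mm': "m \<in> M" "m' \<in> M'"
  shows "\<exists>u'\<in>M. \<exists>v'\<in>M'. \<exists>c'\<in>K. m \<otimes> m' \<oplus> c \<otimes> (u \<otimes> v) = c' \<otimes> (u' \<otimes> v')"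
proof -
  have Kc: "K \<subseteq> carrier R" using subringE(1)[OF K(1)] .
  have c: "u \<in> carrier R" "v \<in> carrier R" "c \<in> carrier R" "m \<in> carrier R" "m' \<in> carrier R"
    using uvc mm' Kc R_submod_carrier[OF M] R_submod_carrier[OF M'] by auto
  define z where "z = u \<otimes> v"
  define y where "y = m \<otimes> m'"
  have zy: "z \<in> K" "y \<in> K" unfolding z_def y_def using MM' uvc mm' by auto
  obtain w where w: "w \<in> K" "z \<otimes> w \<in> K" "(z \<otimes> w) \<otimes> (z \<otimes> w) = z \<otimes> w" "(z \<otimes> w) \<otimes> z = z"
    using vN_regular_idempotent[OF K zy(1)] .
  define f where "f = z \<otimes> w"
  have fK: "\<one> \<ominus> f \<in> K" "f \<in> K"
    using subringE(3,5,7)[OF K(1)] w(2) unfolding f_def minus_eq by auto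
  have y'K: "(\<one> \<ominus> f) \<otimes> y \<in> K" using subringE(6)[OF K(1) fK(1) zy(2)] .
  obtain w' where w': "w' \<in> K" "((\<one> \<ominus> f) \<otimes> y) \<otimes> w' \<in> K"
    "(((\<one> \<ominus> f) \<otimes> y) \<otimes> w') \<otimes> ((\<one> \<ominus> f) \<otimes> y) = (\<one> \<ominus> f) \<otimes> y"
    using vN_regular_idempotent[OF K y'K] by metis
  define u' where "u' = f \<otimes> u \<oplus> (\<one> \<ominus> f) \<otimes> m"
  define v' where "v' = f \<otimes> v \<oplus> (\<one> \<ominus> f) \<otimes> m'"
  define c' where "c' = (c \<oplus> w \<otimes> y) \<otimes> f \<oplus> ((\<one> \<ominus> f) \<otimes> y) \<otimes> w'"
  have "u' \<in> M" "v' \<in> M'" unfolding u'_def v'_def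
    using M M' fK uvc mm' unfolding R_submod_def by auto
  moreover have "c' \<in> K" unfolding c'_def
    using subringE(6,7)[OF K(1)] uvc(3) w(1) w'(2) zy(2) fK(2) by auto
  moreover have "u' \<otimes> v' = z \<oplus> (\<one> \<ominus> f) \<otimes> y"
    unfolding u'_def v'_def z_def y_def
    by (rule idempotent_glue_mult) (use c w Kc in \<open>auto simp: z_def f_def\<close>)
  moreover have "y \<oplus> c \<otimes> z = c' \<otimes> (z \<oplus> (\<one> \<ominus> f) \<otimes> y)"
    unfolding c'_def using w w' Kc c zy
    by (intro idempotent_glue_factor[OF _ _ _ _ _ f_def]) (auto simp: f_def z_def y_def)
  ultimately show ?thesis unfolding y_def z_def by metis
qed

lemma vN_regular_submod_prod_elem:
  assumes K: "subring K R" "vN_regular R K"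
    and M: "R_submod R K M" and M': "R_submod R K M'" and MM': "submod_prod R M M' = K"
    and s: "s \<in> submod_prod R M M'"
  shows "\<exists>u\<in>M. \<exists>v\<in>M'. \<exists>c\<in>K. s = c \<otimes> (u \<otimes> v)"
  using s R_submod_carrier[OF M] R_submod_carrier[OF M']
proof (induction rule: submod_prod_induct)
  case zero
  have "\<zero> \<in> M" "\<zero> \<in> M'" "\<zero> \<in> K" using M M' subringE(2)[OF K(1)] unfolding R_submod_def by auto
  then show ?case using R_submod_carrier[OF M] R_submod_carrier[OF M']
    by (intro bexI[of _ \<zero>]) auto
next
  case (step m m' s)
  then obtain u v c where "u \<in> M" "v \<in> M'" "c \<in> K" "s = c \<otimes> (u \<otimes> v)" by blast
  moreover have "a \<otimes> b \<in> K" if "a \<in> M" "b \<in> M'" for a b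
    using mult_in_submod_prod[OF R_submod_carrier[OF M] R_submod_carrier[OF M'] that] MM' by simp
  ultimately show ?case using vN_regular_sum_of_products[OF K M M'] step(1,2) by blast
qed

theorem vN_regular_invertible_principal:
  assumes K: "subring K R" "vN_regular R K"
    and M: "R_submod R K M" and M': "R_submod R K M'" and MM': "submod_prod R M M' = K"
  shows "\<exists>u\<in>Units R. M = K #> u"
proof -
  have Kc: "K \<subseteq> carrier R" using subringE(1)[OF K(1)] .
  have Mc: "M \<subseteq> carrier R" "M' \<subseteq> carrier R" using M M' R_submod_carrier by auto
  obtain u v c where uvc: "u \<in> M" "v \<in> M'" "c \<in> K" "\<one> = c \<otimes> (u \<otimes> v)"
    using vN_regular_submod_prod_elem[OF K M M' MM'] MM' subringE(3)[OF K(1)] by blast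
  have cu: "u \<in> carrier R" "v \<in> carrier R" "c \<in> carrier R" using uvc Mc Kc by auto
  have inv1: "(c \<otimes> v) \<otimes> u = \<one>" using uvc(4) cu by (simp add: m_ac)
  have "u \<in> Units R" unfolding Units_def using inv1 cu
    by (auto simp: m_comm intro!: bexI[of _ "c \<otimes> v"])
  moreover have "M = K #> u"
  proof
    show "K #> u \<subseteq> M" unfolding r_coset_ring_eq using M uvc(1) unfolding R_submod_def by auto
    show "M \<subseteq> K #> u"
    proof
      fix x assume x: "x \<in> M"
      have "x = ((x \<otimes> v) \<otimes> c) \<otimes> u" using inv1 x Mc cu
        by (metis m_assoc m_closed m_comm r_one subsetD)
      moreover have "(x \<otimes> v) \<otimes> c \<in> K"
        using mult_in_submod_prod[OF Mc x uvc(2)] MM' subringE(6)[OF K(1) _ uvc(3)] by simp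
      ultimately show "x \<in> K #> u" unfolding r_coset_ring_eq by blast
    qed
  qed
  ultimately show ?thesis by blast
qed

end
section \<open>Reduced rings with finitely many minimal primes\<close>

context cring
begin

lemma primeideal_one_notin: "primeideal P R \<Longrightarrow> \<one> \<notin> P"
  using ideal.one_imp_carrier primeideal.I_notcarr primeideal.axioms(1) by metis

lemma minimal_primes_primeideal: "P \<in> minimal_primes R \<Longrightarrow> primeideal P R"
  unfolding minimal_primes_def by simp

lemma minimal_primes_ideal: "P \<in> minimal_primes R \<Longrightarrow> ideal P R"
  using primeideal.axioms(1)[OF minimal_primes_primeideal] .

lemma ideal_add_mem_iff:
  assumes "ideal P R" "c \<in> carrier R" "d \<in> P"
  shows "c \<oplus> d \<in> P \<longleftrightarrow> c \<in> P"
proof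
  note P = ideal.axioms(1)[OF assms(1)]
  have d: "d \<in> carrier R" using ideal.Icarr[OF assms(1,3)] .
  assume "c \<oplus> d \<in> P"
  then have "(c \<oplus> d) \<oplus> \<ominus> d \<in> P"
    using additive_subgroup.a_closed[OF P] additive_subgroup.a_inv_closed[OF P assms(3)] by blast
  moreover have "(c \<oplus> d) \<oplus> \<ominus> d = c" using assms(2) d by algebra
  ultimately show "c \<in> P" by simp
next
  assume "c \<in> P"
  then show "c \<oplus> d \<in> P" using additive_subgroup.a_closed[OF ideal.axioms(1)[OF assms(1)] _ assms(3)] by blast
qed

lemma maximal_powers_avoiding_ideal_sum:
  assumes M: "ideal M R" and max: "\<And>J. ideal J R \<Longrightarrow> (\<forall>n::nat. x [^] n \<notin> J) \<Longrightarrow> M \<subseteq> J \<Longrightarrow> J = M"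
    and c: "c \<in> carrier R" "c \<notin> M"
  shows "\<exists>n::nat. \<exists>i\<in>M. \<exists>r\<in>carrier R. x [^] n = i \<oplus> r \<otimes> c"
proof -
  have mem: "z \<in> M <+>\<^bsub>R\<^esub> PIdl c \<longleftrightarrow> (\<exists>i\<in>M. \<exists>r\<in>carrier R. z = i \<oplus> r \<otimes> c)" for z
    unfolding set_add_def set_mult_def cgenideal_def by auto
  have "m \<in> M <+>\<^bsub>R\<^esub> PIdl c" if "m \<in> M" for m :: 'a
  proof -
    have "m = m \<oplus> \<zero> \<otimes> c" using ideal.Icarr[OF M that] c by simp
    then show ?thesis using mem that by blast
  qed
  moreover have "c \<in> M <+>\<^bsub>R\<^esub> PIdl c"
  proof -
    have "c = \<zero> \<oplus> \<one> \<otimes> c" using c by simp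
    then show ?thesis using mem additive_subgroup.zero_closed[OF ideal.axioms(1)[OF M]] by blast
  qed
  ultimately have "\<not> (\<forall>n::nat. x [^] n \<notin> M <+>\<^bsub>R\<^esub> PIdl c)"
    using max[OF add_ideals[OF M cgenideal_ideal[OF c(1)]]] c(2) by blast
  then show ?thesis using mem by blast
qed

lemma maximal_powers_avoiding_ideal_is_prime:
  assumes x: "x \<in> carrier R" and M: "ideal M R" "\<And>n::nat. x [^] n \<notin> M"
    and max: "\<And>J. ideal J R \<Longrightarrow> (\<forall>n::nat. x [^] n \<notin> J) \<Longrightarrow> M \<subseteq> J \<Longrightarrow> J = M"
  shows "primeideal M R"
proof (rule primeidealI[OF M(1) is_cring])
  show "carrier R \<noteq> M" using M(2)[of 0] by auto
  fix a b assume ab: "a \<in> carrier R" "b \<in> carrier R" "a \<otimes> b \<in> M"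
  show "a \<in> M \<or> b \<in> M"
  proof (rule ccontr)
    assume "\<not> (a \<in> M \<or> b \<in> M)"
    then have "a \<notin> M" "b \<notin> M" by auto
    obtain n i r where nir: "i \<in> M" "r \<in> carrier R" "x [^] (n::nat) = i \<oplus> r \<otimes> a"
      using maximal_powers_avoiding_ideal_sum[OF M(1) max ab(1) \<open>a \<notin> M\<close>] by blast
    obtain k j s where kjs: "j \<in> M" "s \<in> carrier R" "x [^] (k::nat) = j \<oplus> s \<otimes> b"
      using maximal_powers_avoiding_ideal_sum[OF M(1) max ab(2) \<open>b \<notin> M\<close>] by blast
    have ij: "i \<in> carrier R" "j \<in> carrier R" using ideal.Icarr[OF M(1)] nir(1) kjs(1) by auto
    have "x [^] (n + k) = x [^] n \<otimes> x [^] k" using x by (simp add: nat_pow_mult)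
    also have "\<dots> = i \<otimes> (j \<oplus> s \<otimes> b) \<oplus> (r \<otimes> a) \<otimes> j \<oplus> (r \<otimes> s) \<otimes> (a \<otimes> b)"
      unfolding nir(3) kjs(3) using ij nir kjs ab by algebra
    also have "\<dots> \<in> M"
      using ideal.I_r_closed[OF M(1) nir(1)] ideal.I_l_closed[OF M(1) kjs(1)]
        ideal.I_l_closed[OF M(1) ab(3)] additive_subgroup.a_closed[OF ideal.axioms(1)[OF M(1)]]
        ij nir kjs ab by simp
    finally show False using M(2) by blast
  qed
qed

lemma reduced_exists_primeideal_notin:
  assumes red: "reduced R" and x: "x \<in> carrier R" "x \<noteq> \<zero>"
  shows "\<exists>P. primeideal P R \<and> x \<notin> P"
proof -
  have powers: "x [^] (n::nat) \<noteq> \<zero>" for n using red x unfolding reduced_def by blast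
  define \<A> where "\<A> = {I. ideal I R \<and> (\<forall>n::nat. x [^] n \<notin> I)}"
  have "\<exists>M\<in>\<A>. \<forall>J\<in>\<A>. M \<subseteq> J \<longrightarrow> J = M"
  proof (rule subset_Zorn_nonempty)
    show "\<A> \<noteq> {}" unfolding \<A>_def using zeroideal powers by auto
    fix C assume C: "C \<noteq> {}" "subset.chain \<A> C"
    have "subset.chain {I. ideal I R} C" using C(2) unfolding subset_chain_def \<A>_def by auto
    then have "ideal (\<Union>C) R" using chain_Union_is_ideal[of C] C(1) by simp
    then show "\<Union>C \<in> \<A>" using C(2) unfolding subset_chain_def \<A>_def by auto
  qed
  then obtain M where M: "ideal M R" "\<And>n::nat. x [^] n \<notin> M"
    and max: "\<And>J. ideal J R \<Longrightarrow> (\<forall>n::nat. x [^] n \<notin> J) \<Longrightarrow> M \<subseteq> J \<Longrightarrow> J = M"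
    unfolding \<A>_def by auto
  have "primeideal M R" using maximal_powers_avoiding_ideal_is_prime[OF x(1) M max] .
  moreover have "x \<notin> M" using M(2)[of 1] x by simp
  ultimately show ?thesis by blast
qed

lemma primeideal_Inter_chain:
  assumes C: "C \<noteq> {}" "\<And>Q. Q \<in> C \<Longrightarrow> primeideal Q R"
    and chain: "\<And>I J. I \<in> C \<Longrightarrow> J \<in> C \<Longrightarrow> I \<subseteq> J \<or> J \<subseteq> I"
  shows "primeideal (\<Inter>C) R"
proof (rule primeidealI[OF i_Intersect is_cring])
  show "ideal I R" if "I \<in> C" for I using C(2)[OF that] primeideal.axioms(1) by blast
  show "C \<noteq> {}" by fact
  show "carrier R \<noteq> \<Inter>C" using C primeideal_one_notin by blast
  fix a b assume ab: "a \<in> carrier R" "b \<in> carrier R" "a \<otimes> b \<in> \<Inter>C"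
  show "a \<in> \<Inter>C \<or> b \<in> \<Inter>C"
  proof (rule ccontr)
    assume "\<not> (a \<in> \<Inter>C \<or> b \<in> \<Inter>C)"
    then obtain Q1 Q2 where Q: "Q1 \<in> C" "a \<notin> Q1" "Q2 \<in> C" "b \<notin> Q2" by auto
    show False
    proof (cases "Q1 \<subseteq> Q2")
      case True
      then show ?thesis using Q ab primeideal.I_prime[OF C(2)[OF Q(1)]] by blast
    next
      case False
      then have "Q2 \<subseteq> Q1" using chain Q by blast
      then show ?thesis using Q ab primeideal.I_prime[OF C(2)[OF Q(3)]] by blast
    qed
  qed
qed

lemma exists_minimal_prime_below:
  assumes P: "primeideal P R"
  shows "\<exists>Q\<in>minimal_primes R. Q \<subseteq> P"
proof -
  define \<A> where "\<A> = {Q. primeideal Q R \<and> Q \<subseteq> P}"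
  have "\<exists>m\<in>\<A>. \<forall>a\<in>\<A>. a \<subseteq> m \<longrightarrow> a = m"
  proof (rule predicate_Zorn[where P = "\<lambda>a b. b \<subseteq> a"])
    show "partial_order_on \<A> (relation_of (\<lambda>a b. b \<subseteq> a) \<A>)"
      by (rule partial_order_on_relation_ofI) auto
    fix C assume C: "C \<in> Chains (relation_of (\<lambda>a b. b \<subseteq> a) \<A>)"
    have CA: "C \<subseteq> \<A>" using Chains_relation_of[OF C] .
    have chain: "I \<subseteq> J \<or> J \<subseteq> I" if "I \<in> C" "J \<in> C" for I J
      using C that unfolding Chains_def relation_of_def by auto
    show "\<exists>u\<in>\<A>. \<forall>a\<in>C. u \<subseteq> a"
    proof (cases "C = {}")
      case True
      then show ?thesis using P unfolding \<A>_def by auto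
    next
      case False
      then have "primeideal (\<Inter>C) R" "\<Inter>C \<subseteq> P"
        using primeideal_Inter_chain[OF False _ chain] CA unfolding \<A>_def by auto
      then show ?thesis unfolding \<A>_def by auto
    qed
  qed
  then obtain m where "primeideal m R" "m \<subseteq> P"
    "\<And>a. primeideal a R \<Longrightarrow> a \<subseteq> P \<Longrightarrow> a \<subseteq> m \<Longrightarrow> a = m"
    unfolding \<A>_def by auto
  then show ?thesis unfolding minimal_primes_def by blast
qed

lemma reduced_mem_minimal_primes_zero:
  assumes red: "reduced R" and x: "x \<in> carrier R" and all: "\<forall>P\<in>minimal_primes R. x \<in> P"
  shows "x = \<zero>"
proof (rule ccontr)
  assume "x \<noteq> \<zero>"
  then obtain P where "primeideal P R" "x \<notin> P" using reduced_exists_primeideal_notin red x by blast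
  then show False using exists_minimal_prime_below all by blast
qed

lemma prime_avoidance_elem:
  assumes Q: "primeideal Q R" and F: "finite F"
    and FP: "\<And>P. P \<in> F \<Longrightarrow> primeideal P R \<and> \<not> P \<subseteq> Q"
  shows "\<exists>c\<in>carrier R. c \<notin> Q \<and> (\<forall>P\<in>F. c \<in> P)"
  using F FP
proof (induction F rule: finite_induct)
  case empty
  then show ?case using primeideal_one_notin[OF Q] by auto
next
  case (insert P F)
  then obtain c where c: "c \<in> carrier R" "c \<notin> Q" "\<forall>P\<in>F. c \<in> P" by blast
  have P: "primeideal P R" "\<not> P \<subseteq> Q" using insert.prems[of P] by simp_all
  then obtain x where x: "x \<in> P" "x \<notin> Q" by auto
  have xc: "x \<in> carrier R" using ideal.Icarr[OF primeideal.axioms(1)[OF P(1)] x(1)] .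
  have "c \<otimes> x \<notin> Q" using primeideal.I_prime[OF Q c(1) xc] c x by auto
  moreover have "c \<otimes> x \<in> P" using ideal.I_l_closed[OF primeideal.axioms(1)[OF P(1)] x(1) c(1)] .
  moreover have "c \<otimes> x \<in> P'" if "P' \<in> F" for P'
  proof -
    have "primeideal P' R" using insert.prems[of P'] that by simp
    then show ?thesis using ideal.I_r_closed[OF primeideal.axioms(1), of P' R c x] c(3) that xc by simp
  qed
  ultimately show ?case using c xc by (intro bexI[of _ "c \<otimes> x"]) simp_all
qed

lemma minimal_prime_separating_elem:
  assumes fin: "finite (minimal_primes R)" and Q: "Q \<in> minimal_primes R"
  shows "\<exists>d\<in>carrier R. d \<notin> Q \<and> (\<forall>P\<in>minimal_primes R - {Q}. d \<in> P)"
proof (rule prime_avoidance_elem)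
  show "primeideal Q R" using minimal_primes_primeideal[OF Q] .
  show "finite (minimal_primes R - {Q})" using fin by auto
  fix P assume P: "P \<in> minimal_primes R - {Q}"
  then have "primeideal P R" "P \<noteq> Q" using minimal_primes_primeideal by auto
  moreover have "P \<subseteq> Q \<Longrightarrow> P = Q" using Q \<open>primeideal P R\<close> unfolding minimal_primes_def by blast
  ultimately show "primeideal P R \<and> \<not> P \<subseteq> Q" by blast
qed

lemma minimal_primes_indicator_elem:
  assumes fin: "finite (minimal_primes R)" and G: "G \<subseteq> minimal_primes R"
  shows "\<exists>c\<in>carrier R. \<forall>P\<in>minimal_primes R. c \<notin> P \<longleftrightarrow> P \<in> G"
proof -
  have "finite G" using finite_subset[OF G fin] .
  then show ?thesis using G
  proof (induction G rule: finite_induct)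
    case empty
    have "\<zero> \<in> P" if "P \<in> minimal_primes R" for P
      using additive_subgroup.zero_closed[OF ideal.axioms(1)[OF minimal_primes_ideal[OF that]]] .
    then show ?case by (intro bexI[of _ \<zero>]) auto
  next
    case (insert Q G)
    obtain c where c: "c \<in> carrier R" "\<And>P. P \<in> minimal_primes R \<Longrightarrow> c \<notin> P \<longleftrightarrow> P \<in> G"
      using insert by blast
    have Q: "Q \<in> minimal_primes R" using insert.prems by simp
    obtain d where d: "d \<in> carrier R" "d \<notin> Q" "\<And>P. P \<in> minimal_primes R - {Q} \<Longrightarrow> d \<in> P"
      using minimal_prime_separating_elem[OF fin Q] by blast
    have "c \<oplus> d \<notin> P \<longleftrightarrow> P \<in> insert Q G" if P: "P \<in> minimal_primes R" for P
    proof (cases "P = Q")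
      case True
      have "c \<in> Q" using c(2)[OF Q] insert.hyps(2) by blast
      then have "d \<oplus> c \<notin> Q" using ideal_add_mem_iff[OF minimal_primes_ideal[OF Q] d(1)] d(2) by blast
      then show ?thesis using True add.m_comm[OF c(1) d(1)] by simp
    next
      case False
      then show ?thesis using ideal_add_mem_iff[OF minimal_primes_ideal[OF P] c(1) d(3)] c(2)[OF P] P
        by auto
    qed
    then show ?case using c(1) d(1) by (intro bexI[of _ "c \<oplus> d"]) auto
  qed
qed

lemma reduced_nzd_if_notin_minimal_primes:
  assumes red: "reduced R" and t: "t \<in> carrier R" and tP: "\<And>P. P \<in> minimal_primes R \<Longrightarrow> t \<notin> P"
  shows "nzd R t"
  unfolding nzd_def
proof (intro conjI ballI impI)
  fix y assume y: "y \<in> carrier R" "t \<otimes> y = \<zero>"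
  have "y \<in> P" if P: "P \<in> minimal_primes R" for P
    using primeideal.I_prime[OF minimal_primes_primeideal[OF P] t y(1)] tP[OF P] y(2)
      additive_subgroup.zero_closed[OF ideal.axioms(1)[OF minimal_primes_ideal[OF P]]] by simp
  then show "y = \<zero>" using reduced_mem_minimal_primes_zero[OF red y(1)] by blast
qed (rule t)

text \<open>This makes the total ring of fractions von Neumann regular: \<open>a/s = (a/s)\<^sup>2 (s/t)\<close>.\<close>

lemma exists_nzd_mult_eq_square:
  assumes red: "reduced R" and fin: "finite (minimal_primes R)" and a: "a \<in> carrier R"
  shows "\<exists>t. nzd R t \<and> a \<otimes> t = a \<otimes> a"
proof -
  obtain c where c: "c \<in> carrier R" "\<And>P. P \<in> minimal_primes R \<Longrightarrow> c \<notin> P \<longleftrightarrow> a \<in> P"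
    using minimal_primes_indicator_elem[OF fin, of "{P \<in> minimal_primes R. a \<in> P}"] by auto
  have "a \<otimes> c \<in> P" if P: "P \<in> minimal_primes R" for P
    using ideal.I_r_closed[OF minimal_primes_ideal[OF P] _ c(1)] ideal.I_l_closed[OF minimal_primes_ideal[OF P] _ a]
      c(2)[OF P] by blast
  then have ac: "a \<otimes> c = \<zero>" using reduced_mem_minimal_primes_zero[OF red m_closed[OF a c(1)]] by blast
  have "a \<oplus> c \<notin> P" if P: "P \<in> minimal_primes R" for P
  proof (cases "a \<in> P")
    case True
    then have "c \<oplus> a \<notin> P" using ideal_add_mem_iff[OF minimal_primes_ideal[OF P] c(1)] c(2)[OF P] by blast
    then show ?thesis using add.m_comm[OF a c(1)] by simp
  next
    case False
    then show ?thesis using ideal_add_mem_iff[OF minimal_primes_ideal[OF P] a] c(2)[OF P] by blast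
  qed
  then have "nzd R (a \<oplus> c)" using reduced_nzd_if_notin_minimal_primes[OF red] a c(1) by simp
  moreover have "a \<otimes> (a \<oplus> c) = a \<otimes> a" using a c ac by (simp add: r_distr)
  ultimately show ?thesis by blast
qed

end
section \<open>The embedding of total rings of fractions\<close>

locale nzd_preserving_ext =
  fixes B :: "('a, 'm) ring_scheme" and A :: "'a set"
  assumes cring_B: "cring B" and subring_A: "subring A B"
    and reduced_A: "reduced (B\<lparr>carrier := A\<rparr>)"
    and finite_minimal_primes_A: "finite (minimal_primes (B\<lparr>carrier := A\<rparr>))"
    and nzd_A_nzd_B: "\<forall>s. nzd (B\<lparr>carrier := A\<rparr>) s \<longrightarrow> nzd B s"
begin

abbreviation "RA \<equiv> B\<lparr>carrier := A\<rparr>"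
abbreviation "TA \<equiv> Tot RA"
abbreviation "TB \<equiv> Tot B"
abbreviation "cA \<equiv> canon RA"
abbreviation "cB \<equiv> canon B"
abbreviation "tau \<equiv> tot_map B A"
abbreviation "iota \<equiv> (\<lambda>b. frac B b \<one>\<^bsub>B\<^esub>)"
abbreviation "A' \<equiv> iota ` A"
abbreviation "T' \<equiv> tau ` carrier TA"

lemma cring_RA: "cring RA"
proof -
  interpret cring B by (rule cring_B)
  show ?thesis
    using subcring_iff[OF subringE(1)[OF subring_A]] subcringI'[OF subring_A] by simp
qed

sublocale b: cring B by (rule cring_B)
sublocale ra: cring RA by (rule cring_RA)
sublocale ta: cring TA by (rule ra.cring_Tot)
sublocale tb: cring TB by (rule b.cring_Tot)

lemma A_subset: "A \<subseteq> carrier B" using subringE(1)[OF subring_A] .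

lemma nzd_RA_D: "nzd RA s \<Longrightarrow> s \<in> A \<and> nzd B s"
  using nzd_A_nzd_B ra.nzd_carrier by auto

lemma tau_frac:
  assumes a: "a \<in> A" and s: "nzd RA s"
  shows "tau (frac RA a s) = frac B a s"
proof -
  have "frac B a' s' = frac B a s" if "(a', s') \<in> frac RA a s" for a' s'
  proof -
    have "a' \<in> A" "nzd RA s'" "a \<otimes>\<^bsub>B\<^esub> s' = a' \<otimes>\<^bsub>B\<^esub> s" using that unfolding ra.frac_altdef by auto
    then show ?thesis using b.frac_eq_iff[of a' s' a s] nzd_RA_D s a A_subset by (auto simp: b.m_comm)
  qed
  moreover have "(a, s) \<in> frac RA a s" using ra.frac_self a s by simp
  ultimately have "{frac B a' s' | a' s'. (a', s') \<in> frac RA a s} = {frac B a s}" by blast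
  then show ?thesis unfolding tot_map_def by simp
qed

lemma TA_cases:
  assumes "x \<in> carrier TA"
  obtains a s where "a \<in> A" "nzd RA s" "x = frac RA a s"
  using ra.Tot_cases[OF assms] by auto

lemma tau_closed: "x \<in> carrier TA \<Longrightarrow> tau x \<in> carrier TB"
  by (erule TA_cases) (use tau_frac nzd_RA_D A_subset in \<open>auto intro!: b.frac_in_Tot\<close>)

lemma tau_ring_hom: "tau \<in> ring_hom TA TB"
proof (rule ring_hom_memI)
  show "tau x \<in> carrier TB" if "x \<in> carrier TA" for x using tau_closed that .
  fix x y assume x: "x \<in> carrier TA" and y: "y \<in> carrier TA"
  obtain a s where a: "a \<in> A" "nzd RA s" "x = frac RA a s" using x by (rule TA_cases)
  obtain b t where b: "b \<in> A" "nzd RA t" "y = frac RA b t" using y by (rule TA_cases)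
  have st: "nzd RA (s \<otimes>\<^bsub>B\<^esub> t)" using ra.nzd_mult[OF a(2) b(2)] by simp
  have ab: "a \<otimes>\<^bsub>B\<^esub> b \<in> A" "a \<otimes>\<^bsub>B\<^esub> t \<oplus>\<^bsub>B\<^esub> b \<otimes>\<^bsub>B\<^esub> s \<in> A"
    using a b nzd_RA_D subringE(6,7)[OF subring_A] by auto
  have aB: "a \<in> carrier B" "nzd B s" "b \<in> carrier B" "nzd B t" using a b nzd_RA_D A_subset by auto
  show "tau (x \<otimes>\<^bsub>TA\<^esub> y) = tau x \<otimes>\<^bsub>TB\<^esub> tau y"
    using ra.Tot_mult_frac[of a s b t] a b st ab tau_frac b.Tot_mult_frac[OF aB] by simp
  show "tau (x \<oplus>\<^bsub>TA\<^esub> y) = tau x \<oplus>\<^bsub>TB\<^esub> tau y"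
    using ra.Tot_add_frac[of a s b t] a b st ab tau_frac b.Tot_add_frac[OF aB] by simp
next
  show "tau \<one>\<^bsub>TA\<^esub> = \<one>\<^bsub>TB\<^esub>"
    using tau_frac[of "\<one>\<^bsub>B\<^esub>" "\<one>\<^bsub>B\<^esub>"] subringE(3)[OF subring_A] ra.nzd_one ra.Tot_one b.Tot_one
    by simp
qed

lemma tau_inj: "inj_on tau (carrier TA)"
proof (rule inj_onI)
  fix x y assume x: "x \<in> carrier TA" and y: "y \<in> carrier TA" and e: "tau x = tau y"
  obtain a s where a: "a \<in> A" "nzd RA s" "x = frac RA a s" using x by (rule TA_cases)
  obtain b t where b: "b \<in> A" "nzd RA t" "y = frac RA b t" using y by (rule TA_cases)
  have "frac B a s = frac B b t" using e a b tau_frac by simp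
  moreover have "a \<in> carrier B" "b \<in> carrier B" "nzd B s" "nzd B t" using a b nzd_RA_D A_subset by auto
  ultimately have "a \<otimes>\<^bsub>B\<^esub> t = b \<otimes>\<^bsub>B\<^esub> s" using b.frac_eq_iff by simp
  then show "x = y" using ra.frac_eq_iff[of a s b t] a b by simp
qed

sublocale tau: ring_hom_cring TA TB tau
  by (intro ring_hom_cringI ta.is_cring tb.is_cring tau_ring_hom)

sublocale iota: ring_hom_cring B TB iota
  by (intro ring_hom_cringI b.is_cring tb.is_cring b.frac_one_ring_hom)

lemma iota_inj: "inj_on iota (carrier B)"
  by (rule inj_onI) (use b.frac_one_eq_iff in auto)

lemma tau_canon: "tau ` cA = A'"
proof -
  have "tau (frac RA a \<one>\<^bsub>B\<^esub>) = iota a" if "a \<in> A" for a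
    using tau_frac[OF that] ra.nzd_one by simp
  moreover have "cA = (\<lambda>a. frac RA a \<one>\<^bsub>B\<^esub>) ` A" using ra.canon_eq_image by simp
  ultimately show ?thesis unfolding image_image by (auto intro!: image_cong)
qed

lemma cB_eq_image: "cB = iota ` carrier B" using b.canon_eq_image .

lemma subring_cA: "subring cA TA" using ra.subring_canon .
lemma subring_cB: "subring cB TB" using b.subring_canon .
lemma subring_T': "subring T' TB" using tau.ring.img_is_subring[OF ta.carrier_is_subring] .
lemma subring_A': "subring A' TB" using iota.ring.img_is_subring[OF subring_A] .
lemma A'_subset_T': "A' \<subseteq> T'" using image_mono[OF subringE(1)[OF subring_cA], of tau] tau_canon by simp
lemma A'_subset_cB: "A' \<subseteq> cB" using cB_eq_image A_subset by auto
lemma cA_subset: "cA \<subseteq> carrier TA" using subringE(1)[OF subring_cA] .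
lemma cB_subset: "cB \<subseteq> carrier TB" using subringE(1)[OF subring_cB] .
lemma T'_subset: "T' \<subseteq> carrier TB" using subringE(1)[OF subring_T'] .
lemma A'_subset: "A' \<subseteq> carrier TB" using subringE(1)[OF subring_A'] .
lemma one_in_A': "\<one>\<^bsub>TB\<^esub> \<in> A'" using subringE(3)[OF subring_A'] .
lemma one_in_T': "\<one>\<^bsub>TB\<^esub> \<in> T'" using subringE(3)[OF subring_T'] .
lemma one_in_cB: "\<one>\<^bsub>TB\<^esub> \<in> cB" using subringE(3)[OF subring_cB] .

lemma vN_regular_T': "vN_regular TB T'"
  unfolding vN_regular_def
proof
  fix x assume "x \<in> T'"
  then obtain a s where a: "a \<in> A" "nzd RA s" "x = frac B a s"
    using tau_frac by (auto elim: TA_cases)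
  obtain t where t: "nzd RA t" "a \<otimes>\<^bsub>B\<^esub> t = a \<otimes>\<^bsub>B\<^esub> a"
    using ra.exists_nzd_mult_eq_square[OF reduced_A finite_minimal_primes_A, of a] a by auto
  have st: "s \<in> A" "nzd B s" "t \<in> A" "nzd B t" using nzd_RA_D a t by auto
  have c: "a \<in> carrier B" "s \<in> carrier B" "t \<in> carrier B" using a st A_subset by auto
  have "frac B s t \<in> T'"
    using tau_frac[OF st(1) t(1)] ra.frac_in_Tot[of s t] st t by (auto intro!: image_eqI)
  moreover have "x \<otimes>\<^bsub>TB\<^esub> x \<otimes>\<^bsub>TB\<^esub> frac B s t = x"
  proof -
    have "a \<otimes>\<^bsub>B\<^esub> a \<otimes>\<^bsub>B\<^esub> s \<otimes>\<^bsub>B\<^esub> s = a \<otimes>\<^bsub>B\<^esub> (s \<otimes>\<^bsub>B\<^esub> s \<otimes>\<^bsub>B\<^esub> t)"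
      using t(2) c by (metis b.m_assoc b.m_comm b.m_closed)
    then show ?thesis
      unfolding a(3) using c st by (simp add: b.Tot_mult_frac b.nzd_mult b.frac_eq_iff)
  qed
  ultimately show "\<exists>y\<in>T'. x = x \<otimes>\<^bsub>TB\<^esub> x \<otimes>\<^bsub>TB\<^esub> y" by metis
qed

end
section \<open>The map \<open>\<C>(A) \<rightarrow> \<C>(B)\<close>\<close>

context nzd_preserving_ext
begin

abbreviation "GA \<equiv> Inv_group TA cA"
abbreviation "GB \<equiv> Inv_group TB cB"
abbreviation "HA \<equiv> principal_ideals TA cA"
abbreviation "HB \<equiv> principal_ideals TB cB"

sublocale GA: comm_group GA using ta.comm_group_Inv_group[OF subring_cA] .
sublocale GB: comm_group GB using tb.comm_group_Inv_group[OF subring_cB] .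

lemma subgroup_HA: "subgroup HA GA" using ta.subgroup_principal_ideals[OF subring_cA] .
lemma subgroup_HB: "subgroup HB GB" using tb.subgroup_principal_ideals[OF subring_cB] .
lemma normal_HA: "HA \<lhd> GA" using GA.subgroup_imp_normal[OF subgroup_HA] .
lemma normal_HB: "HB \<lhd> GB" using GB.subgroup_imp_normal[OF subgroup_HB] .

lemma Cl_RA_eq: "Cl RA = GA Mod HA" unfolding Cl_def Cart_group_def ..
lemma Cl_B_eq: "Cl B = GB Mod HB" unfolding Cl_def Cart_group_def ..

lemma comm_group_Cl_RA: "comm_group (Cl RA)" unfolding Cl_def using ta.comm_group_Cart_group[OF subring_cA] .
lemma comm_group_Cl_B: "comm_group (Cl B)" unfolding Cl_def using tb.comm_group_Cart_group[OF subring_cB] .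

lemma group_Cl_RA: "group (Cl RA)" unfolding Cl_RA_eq using normal.factorgroup_is_group[OF normal_HA] .
lemma group_Cl_B: "group (Cl B)" unfolding Cl_B_eq using normal.factorgroup_is_group[OF normal_HB] .

lemma HA_r_coset: "u \<in> Units TA \<Longrightarrow> cA #>\<^bsub>TA\<^esub> u \<in> HA"
  using ta.principal_ideals_eq by auto

lemma HB_r_coset: "u \<in> Units TB \<Longrightarrow> cB #>\<^bsub>TB\<^esub> u \<in> HB"
  using tb.principal_ideals_eq by auto

definition B_span :: "('a \<times> 'a) set set \<Rightarrow> ('a \<times> 'a) set set" where
  "B_span L = submod_prod TB cB (tau ` L)"

lemma tau_image_subset: "L \<subseteq> carrier TA \<Longrightarrow> tau ` L \<subseteq> carrier TB"
  using tau_closed by auto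

lemma tau_image_subset_B_span:
  assumes "L \<subseteq> carrier TA" shows "tau ` L \<subseteq> B_span L"
proof
  fix x assume x: "x \<in> tau ` L"
  then have "\<one>\<^bsub>TB\<^esub> \<otimes>\<^bsub>TB\<^esub> x \<in> B_span L"
    unfolding B_span_def using tb.mult_in_submod_prod[OF cB_subset tau_image_subset[OF assms] one_in_cB] by blast
  then show "x \<in> B_span L" using x tau_image_subset[OF assms] by auto
qed

lemma ext_ideal_eq_B_span: "L \<subseteq> carrier TA \<Longrightarrow> ext_ideal B A L = B_span L"
  unfolding ext_ideal_def B_span_def
  using tb.gen_submod_eq_submod_prod[OF subring_cB tau_image_subset] by simp

lemma B_span_submod_prod:
  assumes "L1 \<subseteq> carrier TA" "L2 \<subseteq> carrier TA"
  shows "B_span (submod_prod TA L1 L2) = submod_prod TB (B_span L1) (B_span L2)"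
  unfolding B_span_def tau.image_submod_prod[OF assms]
  using tb.submod_prod_subring_extend[OF subring_cB tau_image_subset[OF assms(1)] tau_image_subset[OF assms(2)]] ..

lemma B_span_cA: "B_span cA = cB"
  unfolding B_span_def tau_canon using tb.submod_prod_subring_absorb[OF subring_cB subring_A' A'_subset_cB] .

lemma B_span_Inv_group: "L \<in> carrier GA \<Longrightarrow> B_span L \<in> carrier GB"
proof -
  assume L: "L \<in> carrier GA"
  obtain L' where L': "L' \<in> carrier GA" "submod_prod TA L L' = cA"
    using ta.Inv_group_carrier_inverse[OF L] .
  have c: "L \<subseteq> carrier TA" "L' \<subseteq> carrier TA" using L L'(1) ta.Inv_group_carrier_subset by auto
  have "submod_prod TB (B_span L) (B_span L') = cB" using B_span_submod_prod[OF c] L'(2) B_span_cA by simp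
  moreover have "R_submod TB cB (B_span M)" if "M \<subseteq> carrier TA" for M
    unfolding B_span_def
    using tb.R_submod_submod_prod[OF tb.R_submod_subring[OF subring_cB] tau_image_subset[OF that] cB_subset] .
  ultimately show ?thesis unfolding Inv_group_def invertible_ideal_def using c by auto
qed

lemma B_span_r_coset:
  assumes x: "x \<in> Units TA" shows "B_span (cA #>\<^bsub>TA\<^esub> x) = cB #>\<^bsub>TB\<^esub> tau x"
proof -
  have xc: "x \<in> carrier TA" using x by auto
  have "tau ` (cA #>\<^bsub>TA\<^esub> x) = A' #>\<^bsub>TB\<^esub> tau x" using tau.image_r_coset[OF xc cA_subset] tau_canon by simp
  then show ?thesis unfolding B_span_def
    using tb.submod_prod_subring_r_coset[OF subring_cB subring_A' A'_subset_cB tau_closed[OF xc]] by simp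
qed

definition ext_class :: "('a \<times> 'a) set set \<Rightarrow> ('a \<times> 'a) set set set" where
  "ext_class L = HB #>\<^bsub>GB\<^esub> B_span L"

lemma ext_class_hom: "ext_class \<in> hom GA (Cl B)"
proof (rule homI)
  fix L assume "L \<in> carrier GA"
  then show "ext_class L \<in> carrier (Cl B)"
    unfolding ext_class_def Cl_B_eq FactGroup_def
    using GB.rcosetsI[OF subgroup.subset[OF subgroup_HB] B_span_Inv_group] by simp
next
  fix L1 L2 assume L: "L1 \<in> carrier GA" "L2 \<in> carrier GA"
  then have "B_span (L1 \<otimes>\<^bsub>GA\<^esub> L2) = B_span L1 \<otimes>\<^bsub>GB\<^esub> B_span L2"
    using B_span_submod_prod ta.Inv_group_carrier_subset by (simp add: Inv_group_def)
  then show "ext_class (L1 \<otimes>\<^bsub>GA\<^esub> L2) = ext_class L1 \<otimes>\<^bsub>Cl B\<^esub> ext_class L2"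
    unfolding ext_class_def Cl_B_eq
    using normal.rcos_sum[OF normal_HB B_span_Inv_group[OF L(1)] B_span_Inv_group[OF L(2)]]
    by (simp add: FactGroup_def)
qed

sublocale ext_class: group_hom GA "Cl B" ext_class
  by (intro group_hom.intro group_hom_axioms.intro GA.is_group group_Cl_B ext_class_hom)

lemma ext_class_principal: "h \<in> HA \<Longrightarrow> ext_class h = \<one>\<^bsub>Cl B\<^esub>"
proof -
  assume "h \<in> HA"
  then obtain x where x: "x \<in> Units TA" "h = cA #>\<^bsub>TA\<^esub> x" using ta.principal_ideals_eq by auto
  then have "B_span h \<in> HB" using B_span_r_coset HB_r_coset tau.hom_Units(1) by simp
  then show ?thesis unfolding ext_class_def Cl_B_eq
    using GB.coset_join2[OF subgroup.mem_carrier[OF subgroup_HB] subgroup_HB] by simp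
qed

lemma ext_class_rcos_const:
  assumes L: "L \<in> carrier GA" and L': "L' \<in> HA #>\<^bsub>GA\<^esub> L"
  shows "ext_class L' = ext_class L"
proof -
  obtain h where h: "h \<in> HA" "L' = h \<otimes>\<^bsub>GA\<^esub> L" using L' unfolding r_coset_def by auto
  have "h \<in> carrier GA" using h(1) subgroup.subset[OF subgroup_HA] by auto
  then show ?thesis using h ext_class_principal L by simp
qed

text \<open>\<^const>\<open>Cl_map\<close> picks a representative with \<open>SOME\<close>; its value does not depend on the choice.\<close>

lemma Cl_map_rcos: "L \<in> carrier GA \<Longrightarrow> Cl_map B A (HA #>\<^bsub>GA\<^esub> L) = ext_class L"
proof -
  assume L: "L \<in> carrier GA"
  define L' where "L' = (SOME L'. L' \<in> HA #>\<^bsub>GA\<^esub> L)"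
  have L': "L' \<in> HA #>\<^bsub>GA\<^esub> L" unfolding L'_def using GA.rcos_self[OF L subgroup_HA] by (rule someI)
  then have "L' \<in> carrier GA" using subgroup.elemrcos_carrier[OF subgroup_HA GA.is_group L] by simp
  then have "Cl_map B A (HA #>\<^bsub>GA\<^esub> L) = ext_class L'"
    unfolding Cl_map_def ext_class_def L'_def[symmetric]
    using ext_ideal_eq_B_span[OF ta.Inv_group_carrier_subset] by simp
  also have "\<dots> = ext_class L" using ext_class_rcos_const[OF L L'] .
  finally show ?thesis .
qed

lemma Cl_RA_cases:
  assumes "K \<in> carrier (Cl RA)"
  obtains L where "L \<in> carrier GA" "K = HA #>\<^bsub>GA\<^esub> L"
  using assms unfolding Cl_RA_eq FactGroup_def RCOSETS_def by auto

lemma Cl_map_hom: "Cl_map B A \<in> hom (Cl RA) (Cl B)"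
proof (rule homI)
  fix K assume "K \<in> carrier (Cl RA)"
  then show "Cl_map B A K \<in> carrier (Cl B)" by (metis Cl_RA_cases Cl_map_rcos ext_class.hom_closed)
next
  fix K1 K2 assume "K1 \<in> carrier (Cl RA)" "K2 \<in> carrier (Cl RA)"
  then obtain L1 L2 where L: "L1 \<in> carrier GA" "K1 = HA #>\<^bsub>GA\<^esub> L1" "L2 \<in> carrier GA" "K2 = HA #>\<^bsub>GA\<^esub> L2"
    by (metis Cl_RA_cases)
  then have "K1 \<otimes>\<^bsub>Cl RA\<^esub> K2 = HA #>\<^bsub>GA\<^esub> (L1 \<otimes>\<^bsub>GA\<^esub> L2)"
    using normal.rcos_sum[OF normal_HA] by (simp add: Cl_RA_eq FactGroup_def)
  then show "Cl_map B A (K1 \<otimes>\<^bsub>Cl RA\<^esub> K2) = Cl_map B A K1 \<otimes>\<^bsub>Cl B\<^esub> Cl_map B A K2"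
    using L Cl_map_rcos by simp
qed

end
section \<open>The map \<open>\<G>(A,B) \<rightarrow> \<C>(A)\<close>\<close>

context nzd_preserving_ext
begin

abbreviation "GBA \<equiv> Inv_group B A"
abbreviation "HBA \<equiv> principal_ideals B A"

sublocale GBA: comm_group GBA using b.comm_group_Inv_group[OF subring_A] .

lemma iota_image_subset: "I \<subseteq> carrier B \<Longrightarrow> iota ` I \<subseteq> carrier TB"
  by auto

lemma R_submod_l_coset_iota:
  "R_submod B A I \<Longrightarrow> v \<in> carrier TB \<Longrightarrow> R_submod TB A' (v <#\<^bsub>TB\<^esub> iota ` I)"
  using tb.R_submod_l_coset[OF iota.R_submod_image[OF _ A_subset] _ A'_subset] .

definition T'_span :: "'a set \<Rightarrow> ('a \<times> 'a) set set" where
  "T'_span I = submod_prod TB T' (iota ` I)"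

lemma T'_span_submod_prod:
  assumes "I \<subseteq> carrier B" "J \<subseteq> carrier B"
  shows "submod_prod TB (T'_span I) (T'_span J) = T'_span (submod_prod B I J)"
  unfolding T'_span_def iota.image_submod_prod[OF assms]
  using tb.submod_prod_subring_extend[OF subring_T' iota_image_subset[OF assms(1)] iota_image_subset[OF assms(2)]] .

lemma T'_span_A: "T'_span A = T'"
  unfolding T'_span_def using tb.submod_prod_subring_absorb[OF subring_T' subring_A' A'_subset_T'] .

lemma R_submod_T'_span: "I \<subseteq> carrier B \<Longrightarrow> R_submod TB T' (T'_span I)"
  unfolding T'_span_def
  using tb.R_submod_submod_prod[OF tb.R_submod_subring[OF subring_T'] iota_image_subset T'_subset] .

lemma iota_subset_T'_span:
  assumes "I \<subseteq> carrier B" shows "iota ` I \<subseteq> T'_span I"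
proof
  fix x assume x: "x \<in> iota ` I"
  then have "\<one>\<^bsub>TB\<^esub> \<otimes>\<^bsub>TB\<^esub> x \<in> T'_span I"
    unfolding T'_span_def using tb.mult_in_submod_prod[OF T'_subset iota_image_subset[OF assms] one_in_T'] by blast
  then show "x \<in> T'_span I" using x iota_image_subset[OF assms] by auto
qed

lemma T'_span_Inv_group:
  assumes I: "I \<in> carrier GBA" and J: "J \<in> carrier GBA" and IJ: "submod_prod B I J = A"
  shows "T'_span I \<in> carrier (Inv_group TB T')" "submod_prod TB (T'_span I) (T'_span J) = T'"
proof -
  have c: "I \<subseteq> carrier B" "J \<subseteq> carrier B" using I J b.Inv_group_carrier_subset by auto
  show "submod_prod TB (T'_span I) (T'_span J) = T'" using T'_span_submod_prod[OF c] IJ T'_span_A by simp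
  then show "T'_span I \<in> carrier (Inv_group TB T')"
    unfolding Inv_group_def invertible_ideal_def using R_submod_T'_span c by auto
qed

definition span_generators :: "'a set \<Rightarrow> ('a \<times> 'a) set set" where
  "span_generators I = {u \<in> Units TB. T'_span I = T' #>\<^bsub>TB\<^esub> u}"

lemma span_generators_nonempty: "I \<in> carrier GBA \<Longrightarrow> \<exists>u. u \<in> span_generators I"
proof -
  assume I: "I \<in> carrier GBA"
  obtain J where J: "J \<in> carrier GBA" "submod_prod B I J = A" using b.Inv_group_carrier_inverse[OF I] .
  have c: "I \<subseteq> carrier B" "J \<subseteq> carrier B" using I J b.Inv_group_carrier_subset by auto
  show ?thesis
    using tb.vN_regular_invertible_principal[OF subring_T' vN_regular_T' R_submod_T'_span[OF c(1)]
        R_submod_T'_span[OF c(2)] T'_span_Inv_group(2)[OF I J]]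
    unfolding span_generators_def by blast
qed

lemma span_generators_inverse:
  assumes I: "I \<in> carrier GBA" and J: "J \<in> carrier GBA" and IJ: "submod_prod B I J = A"
    and u: "u \<in> span_generators I"
  shows "inv\<^bsub>TB\<^esub> u \<in> span_generators J"
proof -
  have uU: "u \<in> Units TB" and uI: "T'_span I = T' #>\<^bsub>TB\<^esub> u" using u unfolding span_generators_def by auto
  have JI: "submod_prod B J I = A"
    using IJ b.submod_prod_comm[OF b.Inv_group_carrier_subset[OF I] b.Inv_group_carrier_subset[OF J]] by simp
  have "inv\<^bsub>Inv_group TB T'\<^esub> (T'_span I) = T'_span J"
    using tb.Inv_group_inv_eq[OF subring_T' T'_span_Inv_group(1)[OF I J IJ] T'_span_Inv_group(1)[OF J I JI]
        T'_span_Inv_group(2)[OF I J IJ]] .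
  then show ?thesis
    using uI tb.Inv_group_inv_r_coset[OF subring_T' uU] uU unfolding span_generators_def by simp
qed

lemma l_coset_inv_subset_T':
  assumes "I \<subseteq> carrier B" "u \<in> span_generators I"
  shows "inv\<^bsub>TB\<^esub> u <#\<^bsub>TB\<^esub> iota ` I \<subseteq> T'"
proof -
  have "u \<in> Units TB" "iota ` I \<subseteq> T' #>\<^bsub>TB\<^esub> u"
    using assms iota_subset_T'_span unfolding span_generators_def by auto
  then show ?thesis using tb.l_coset_inv_subset[OF T'_subset] by blast
qed

lemma span_generators_mult:
  assumes "I1 \<subseteq> carrier B" "I2 \<subseteq> carrier B" "u1 \<in> span_generators I1" "u2 \<in> span_generators I2"
  shows "u1 \<otimes>\<^bsub>TB\<^esub> u2 \<in> span_generators (submod_prod B I1 I2)"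
proof -
  have u: "u1 \<in> Units TB" "u2 \<in> Units TB" "T'_span I1 = T' #>\<^bsub>TB\<^esub> u1" "T'_span I2 = T' #>\<^bsub>TB\<^esub> u2"
    using assms(3,4) unfolding span_generators_def by auto
  then have "T'_span (submod_prod B I1 I2) = T' #>\<^bsub>TB\<^esub> (u1 \<otimes>\<^bsub>TB\<^esub> u2)"
    using T'_span_submod_prod[OF assms(1,2)]
      tb.submod_prod_r_coset[OF subring_T' tb.Units_closed[OF u(1)] tb.Units_closed[OF u(2)]] by simp
  then show ?thesis unfolding span_generators_def using u by simp
qed

text \<open>For a generator \<open>u\<close> of \<open>T' I\<close>, the set \<open>u\<^sup>-\<^sup>1 I\<close> lies in \<open>T'\<close>; its preimage in \<open>T(A)\<close>
  is an invertible \<open>A\<close>-submodule, whose class is the image of \<open>I\<close> in \<open>\<C>(A)\<close>.\<close>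

definition scaled_ideal :: "('a \<times> 'a) set \<Rightarrow> 'a set \<Rightarrow> ('a \<times> 'a) set set" where
  "scaled_ideal u I = {x \<in> carrier TA. tau x \<in> inv\<^bsub>TB\<^esub> u <#\<^bsub>TB\<^esub> iota ` I}"

lemma scaled_ideal_subset: "scaled_ideal u I \<subseteq> carrier TA"
  unfolding scaled_ideal_def by auto

lemma tau_image_eq_iff: "L \<subseteq> carrier TA \<Longrightarrow> L' \<subseteq> carrier TA \<Longrightarrow> tau ` L = tau ` L' \<longleftrightarrow> L = L'"
  using inj_on_image_eq_iff[OF tau_inj] .

lemma image_scaled_ideal:
  assumes "I \<subseteq> carrier B" "u \<in> span_generators I"
  shows "tau ` scaled_ideal u I = inv\<^bsub>TB\<^esub> u <#\<^bsub>TB\<^esub> iota ` I"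
proof -
  have "inv\<^bsub>TB\<^esub> u <#\<^bsub>TB\<^esub> iota ` I \<subseteq> tau ` carrier TA" using l_coset_inv_subset_T'[OF assms] .
  then show ?thesis unfolding scaled_ideal_def by auto
qed

lemma scaled_ideal_Inv_group:
  assumes I: "I \<in> carrier GBA" and u: "u \<in> span_generators I"
  shows "scaled_ideal u I \<in> carrier GA"
proof -
  obtain J where J: "J \<in> carrier GBA" "submod_prod B I J = A" using b.Inv_group_carrier_inverse[OF I] .
  have c: "I \<subseteq> carrier B" "J \<subseteq> carrier B" using I J(1) b.Inv_group_carrier_subset by auto
  have uU: "u \<in> Units TB" using u unfolding span_generators_def by auto
  have "inv\<^bsub>TB\<^esub> u \<in> span_generators J" using span_generators_inverse[OF I J u] .
  then have J_sub: "u <#\<^bsub>TB\<^esub> iota ` J \<subseteq> T'"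
    using l_coset_inv_subset_T'[OF c(2)] tb.Units_inv_inv[OF uU] by metis
  have "submod_prod TB (inv\<^bsub>TB\<^esub> u <#\<^bsub>TB\<^esub> iota ` I) (u <#\<^bsub>TB\<^esub> iota ` J)
      = (inv\<^bsub>TB\<^esub> u \<otimes>\<^bsub>TB\<^esub> u) <#\<^bsub>TB\<^esub> submod_prod TB (iota ` I) (iota ` J)"
    using tb.submod_prod_l_coset_l_coset[OF tb.Units_inv_closed[OF uU] tb.Units_closed[OF uU]
        iota_image_subset[OF c(1)] iota_image_subset[OF c(2)]] .
  also have "\<dots> = iota ` submod_prod B I J"
    using uU tb.l_coset_one[OF tb.submod_prod_carrier[OF iota_image_subset[OF c(1)] iota_image_subset[OF c(2)]]]
      iota.image_submod_prod[OF c] by simp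
  finally have "submod_prod TB (inv\<^bsub>TB\<^esub> u <#\<^bsub>TB\<^esub> iota ` I) (u <#\<^bsub>TB\<^esub> iota ` J) = iota ` submod_prod B I J" .
  then have prod: "submod_prod TB (inv\<^bsub>TB\<^esub> u <#\<^bsub>TB\<^esub> iota ` I) (u <#\<^bsub>TB\<^esub> iota ` J) = tau ` cA"
    using J(2) tau_canon by simp
  have sm: "R_submod TB (tau ` cA) (v <#\<^bsub>TB\<^esub> iota ` K)" if "K \<in> carrier GBA" "v \<in> carrier TB" for v K
    using R_submod_l_coset_iota[OF b.Inv_group_carrier_R_submod[OF that(1)] that(2)] tau_canon by simp
  show ?thesis unfolding scaled_ideal_def
    using tau.vimage_Inv_group[OF tau_inj cA_subset sm[OF I] l_coset_inv_subset_T'[OF c(1) u] sm[OF J(1)] J_sub prod]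
      tb.Units_closed[OF uU] tb.Units_inv_closed[OF uU] by simp
qed

lemma scaled_ideal_mult:
  assumes I1: "I1 \<in> carrier GBA" and I2: "I2 \<in> carrier GBA"
    and u1: "u1 \<in> span_generators I1" and u2: "u2 \<in> span_generators I2"
  shows "scaled_ideal (u1 \<otimes>\<^bsub>TB\<^esub> u2) (I1 \<otimes>\<^bsub>GBA\<^esub> I2) = scaled_ideal u1 I1 \<otimes>\<^bsub>GA\<^esub> scaled_ideal u2 I2"
proof -
  have c: "I1 \<subseteq> carrier B" "I2 \<subseteq> carrier B" using I1 I2 b.Inv_group_carrier_subset by auto
  have uU: "u1 \<in> Units TB" "u2 \<in> Units TB" using u1 u2 unfolding span_generators_def by auto
  have I12: "I1 \<otimes>\<^bsub>GBA\<^esub> I2 = submod_prod B I1 I2" by (simp add: Inv_group_def)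
  have "tau ` (scaled_ideal u1 I1 \<otimes>\<^bsub>GA\<^esub> scaled_ideal u2 I2)
      = submod_prod TB (inv\<^bsub>TB\<^esub> u1 <#\<^bsub>TB\<^esub> iota ` I1) (inv\<^bsub>TB\<^esub> u2 <#\<^bsub>TB\<^esub> iota ` I2)"
    using tau.image_submod_prod[OF scaled_ideal_subset scaled_ideal_subset] image_scaled_ideal c u1 u2
    by (simp add: Inv_group_def)
  also have "\<dots> = inv\<^bsub>TB\<^esub> (u1 \<otimes>\<^bsub>TB\<^esub> u2) <#\<^bsub>TB\<^esub> iota ` submod_prod B I1 I2"
    using tb.submod_prod_l_coset_l_coset iota.image_submod_prod[OF c] tb.inv_mult_Units[OF uU]
      iota_image_subset c uU by simp
  also have "\<dots> = tau ` scaled_ideal (u1 \<otimes>\<^bsub>TB\<^esub> u2) (I1 \<otimes>\<^bsub>GBA\<^esub> I2)"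
    using image_scaled_ideal span_generators_mult[OF c u1 u2] b.submod_prod_carrier[OF c] I12 by simp
  finally have "tau ` (scaled_ideal u1 I1 \<otimes>\<^bsub>GA\<^esub> scaled_ideal u2 I2)
      = tau ` scaled_ideal (u1 \<otimes>\<^bsub>TB\<^esub> u2) (I1 \<otimes>\<^bsub>GBA\<^esub> I2)" .
  moreover have "scaled_ideal u1 I1 \<otimes>\<^bsub>GA\<^esub> scaled_ideal u2 I2 \<subseteq> carrier TA"
    using ta.Inv_group_carrier_subset[OF GA.m_closed[OF scaled_ideal_Inv_group[OF I1 u1]
          scaled_ideal_Inv_group[OF I2 u2]]] .
  ultimately show ?thesis using tau_image_eq_iff[OF _ scaled_ideal_subset] by simp
qed

lemma span_generators_unit_factor:
  assumes u: "u \<in> span_generators I" and u': "u' \<in> span_generators I"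
  obtains w where "w \<in> Units TA" "u' = tau w \<otimes>\<^bsub>TB\<^esub> u"
proof -
  have uU: "u \<in> Units TB" "u' \<in> Units TB" "T' #>\<^bsub>TB\<^esub> u = T' #>\<^bsub>TB\<^esub> u'"
    using u u' unfolding span_generators_def by auto
  obtain w w' where w: "w \<in> T'" "w' \<in> T'" "u' = w \<otimes>\<^bsub>TB\<^esub> u" "w' \<otimes>\<^bsub>TB\<^esub> w = \<one>\<^bsub>TB\<^esub>"
    using tb.r_coset_Units_eq_D[OF subring_T' uU] by blast
  obtain w0 where w0: "w0 \<in> carrier TA" "w = tau w0" using w(1) by blast
  obtain w0' where w0': "w0' \<in> carrier TA" "w' = tau w0'" using w(2) by blast
  have "tau (w0' \<otimes>\<^bsub>TA\<^esub> w0) = tau \<one>\<^bsub>TA\<^esub>" using w(4) w0 w0' by simp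
  then have "w0' \<otimes>\<^bsub>TA\<^esub> w0 = \<one>\<^bsub>TA\<^esub>"
    using inj_onD[OF tau_inj _ ta.m_closed[OF w0'(1) w0(1)] ta.one_closed] by blast
  then have "w0 \<in> Units TA" using w0(1) w0'(1) ta.m_comm unfolding Units_def by auto
  then show thesis using that w(3) w0(2) by blast
qed

lemma submod_prod_A'_iota: "R_submod B A I \<Longrightarrow> submod_prod TB A' (iota ` I) = iota ` I"
  using tb.submod_prod_subring_left[OF subring_A' iota.R_submod_image[OF _ A_subset]] .

lemma scaled_ideal_class_indep:
  assumes I: "I \<in> carrier GBA" and u: "u \<in> span_generators I" and u': "u' \<in> span_generators I"
  shows "HA #>\<^bsub>GA\<^esub> scaled_ideal u' I = HA #>\<^bsub>GA\<^esub> scaled_ideal u I"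
proof -
  have c: "I \<subseteq> carrier B" using I b.Inv_group_carrier_subset by auto
  have uU: "u \<in> Units TB" using u unfolding span_generators_def by auto
  obtain w where w: "w \<in> Units TA" "u' = tau w \<otimes>\<^bsub>TB\<^esub> u" using span_generators_unit_factor[OF u u'] .
  have wU: "tau w \<in> Units TB" "inv\<^bsub>TB\<^esub> (tau w) = tau (inv\<^bsub>TA\<^esub> w)" using tau.hom_Units[OF w(1)] by auto
  define h where "h = cA #>\<^bsub>TA\<^esub> inv\<^bsub>TA\<^esub> w"
  have h: "h \<in> HA" "h \<in> carrier GA" unfolding h_def using HA_r_coset w(1) subgroup.mem_carrier[OF subgroup_HA] by auto
  have "tau ` h = inv\<^bsub>TB\<^esub> (tau w) <#\<^bsub>TB\<^esub> A'"
    unfolding h_def using tau.image_r_coset[OF _ cA_subset] tau_canon w(1) wU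
      tb.r_coset_eq_l_coset[OF A'_subset] by simp
  then have "tau ` (h \<otimes>\<^bsub>GA\<^esub> scaled_ideal u I)
      = submod_prod TB (inv\<^bsub>TB\<^esub> (tau w) <#\<^bsub>TB\<^esub> A') (inv\<^bsub>TB\<^esub> u <#\<^bsub>TB\<^esub> iota ` I)"
    using tau.image_submod_prod[OF ta.Inv_group_carrier_subset[OF h(2)] scaled_ideal_subset]
      image_scaled_ideal[OF c u] by (simp add: Inv_group_def)
  also have "\<dots> = (inv\<^bsub>TB\<^esub> (tau w) \<otimes>\<^bsub>TB\<^esub> inv\<^bsub>TB\<^esub> u) <#\<^bsub>TB\<^esub> submod_prod TB A' (iota ` I)"
    using tb.submod_prod_l_coset_l_coset[OF tb.Units_inv_closed[OF wU(1)] tb.Units_inv_closed[OF uU]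
        A'_subset iota_image_subset[OF c]] .
  also have "inv\<^bsub>TB\<^esub> (tau w) \<otimes>\<^bsub>TB\<^esub> inv\<^bsub>TB\<^esub> u = inv\<^bsub>TB\<^esub> u'"
    using tb.inv_mult_Units[OF wU(1) uU] w(2) by simp
  finally have "tau ` (h \<otimes>\<^bsub>GA\<^esub> scaled_ideal u I) = tau ` scaled_ideal u' I"
    using image_scaled_ideal[OF c u'] submod_prod_A'_iota[OF b.Inv_group_carrier_R_submod[OF I]] by simp
  then have "h \<otimes>\<^bsub>GA\<^esub> scaled_ideal u I = scaled_ideal u' I"
    using tau_image_eq_iff[OF ta.Inv_group_carrier_subset[OF GA.m_closed[OF h(2) scaled_ideal_Inv_group[OF I u]]]
        scaled_ideal_subset] by simp
  then have "scaled_ideal u' I \<in> HA #>\<^bsub>GA\<^esub> scaled_ideal u I" unfolding r_coset_def using h(1) by auto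
  then show ?thesis using GA.repr_independence[OF _ scaled_ideal_Inv_group[OF I u] subgroup_HA] by simp
qed

definition embed_class :: "'a set \<Rightarrow> ('a \<times> 'a) set set set" where
  "embed_class I = HA #>\<^bsub>GA\<^esub> scaled_ideal (SOME u. u \<in> span_generators I) I"

lemma embed_class_eq:
  "I \<in> carrier GBA \<Longrightarrow> u \<in> span_generators I \<Longrightarrow> embed_class I = HA #>\<^bsub>GA\<^esub> scaled_ideal u I"
proof -
  assume I: "I \<in> carrier GBA" and u: "u \<in> span_generators I"
  have "(SOME u. u \<in> span_generators I) \<in> span_generators I" using u by (rule someI)
  then show ?thesis unfolding embed_class_def using scaled_ideal_class_indep[OF I u] by simp
qed

lemma embed_class_hom: "embed_class \<in> hom GBA (Cl RA)"
proof (rule homI)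
  fix I assume I: "I \<in> carrier GBA"
  then obtain u where u: "u \<in> span_generators I" using span_generators_nonempty by blast
  show "embed_class I \<in> carrier (Cl RA)"
    unfolding embed_class_eq[OF I u] Cl_RA_eq FactGroup_def
    using GA.rcosetsI[OF subgroup.subset[OF subgroup_HA] scaled_ideal_Inv_group[OF I u]] by simp
next
  fix I1 I2 assume I: "I1 \<in> carrier GBA" "I2 \<in> carrier GBA"
  obtain u1 u2 where u: "u1 \<in> span_generators I1" "u2 \<in> span_generators I2"
    using span_generators_nonempty[OF I(1)] span_generators_nonempty[OF I(2)] by blast
  have c: "I1 \<subseteq> carrier B" "I2 \<subseteq> carrier B" using I b.Inv_group_carrier_subset by auto
  have "u1 \<otimes>\<^bsub>TB\<^esub> u2 \<in> span_generators (I1 \<otimes>\<^bsub>GBA\<^esub> I2)"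
    using span_generators_mult[OF c u] by (simp add: Inv_group_def)
  then have "embed_class (I1 \<otimes>\<^bsub>GBA\<^esub> I2) = HA #>\<^bsub>GA\<^esub> (scaled_ideal u1 I1 \<otimes>\<^bsub>GA\<^esub> scaled_ideal u2 I2)"
    using embed_class_eq[OF GBA.m_closed[OF I]] scaled_ideal_mult[OF I u] by simp
  then show "embed_class (I1 \<otimes>\<^bsub>GBA\<^esub> I2) = embed_class I1 \<otimes>\<^bsub>Cl RA\<^esub> embed_class I2"
    using normal.rcos_sum[OF normal_HA scaled_ideal_Inv_group[OF I(1) u(1)] scaled_ideal_Inv_group[OF I(2) u(2)]]
      embed_class_eq I u by (simp add: Cl_RA_eq FactGroup_def)
qed

sublocale embed_class: group_hom GBA "Cl RA" embed_class
  by (intro group_hom.intro group_hom_axioms.intro GBA.is_group group_Cl_RA embed_class_hom)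

end
section \<open>Exactness\<close>

lemma (in group_hom) FactGroup_image:
  "(\<lambda>Z. the_elem (h ` Z)) ` carrier (G Mod kernel G H h) = h ` carrier G"
proof -
  have coset: "the_elem (h ` (kernel G H h #> g)) = h g" if g: "g \<in> carrier G" for g
  proof -
    have "h ` (kernel G H h #> g) = {h g}"
      using G.rcos_self[OF g subgroup_kernel] g by (auto simp: kernel_def r_coset_def)
    then show ?thesis by simp
  qed
  show ?thesis
    unfolding FactGroup_def RCOSETS_def using coset by (auto simp: image_iff)
qed

context nzd_preserving_ext
begin

lemma Cl_RA_one: "\<one>\<^bsub>Cl RA\<^esub> = HA" by (simp add: Cl_RA_eq)
lemma Cl_B_one: "\<one>\<^bsub>Cl B\<^esub> = HB" by (simp add: Cl_B_eq)

lemma principal_in_kernel_embed_class: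
  assumes "I \<in> HBA" shows "I \<in> kernel GBA (Cl RA) embed_class"
proof -
  obtain b where b: "b \<in> Units B" "I = A #>\<^bsub>B\<^esub> b" using assms b.principal_ideals_eq by auto
  have bc: "b \<in> carrier B" using b(1) by blast
  have I: "I \<in> carrier GBA" using assms subgroup.subset[OF b.subgroup_principal_ideals[OF subring_A]] by blast
  have ib: "iota b \<in> Units TB" using iota.hom_Units(1)[OF b(1)] .
  have iI: "iota ` I = iota b <#\<^bsub>TB\<^esub> A'"
    using b(2) iota.image_r_coset[OF bc A_subset] tb.r_coset_eq_l_coset[OF A'_subset iota.hom_closed[OF bc]]
    by simp
  have "T'_span I = T' #>\<^bsub>TB\<^esub> iota b"
    unfolding T'_span_def iI
    using tb.submod_prod_subring_r_coset[OF subring_T' subring_A' A'_subset_T' iota.hom_closed[OF bc]]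
      tb.r_coset_eq_l_coset[OF A'_subset iota.hom_closed[OF bc]] by simp
  then have u: "iota b \<in> span_generators I" unfolding span_generators_def using ib by blast
  have "tau ` scaled_ideal (iota b) I = tau ` cA"
    using image_scaled_ideal[OF b.Inv_group_carrier_subset[OF I] u] iI tb.l_coset_inv_cancel[OF ib A'_subset]
      tau_canon by simp
  then have "scaled_ideal (iota b) I = cA" using tau_image_eq_iff[OF scaled_ideal_subset cA_subset] by simp
  moreover have "cA \<in> HA" using HA_r_coset[OF ta.Units_one_closed] ta.r_coset_one_subring[OF subring_cA] by simp
  ultimately have "embed_class I = HA"
    using embed_class_eq[OF I u] GA.coset_join2[OF subgroup.mem_carrier[OF subgroup_HA] subgroup_HA] by simp
  then show ?thesis unfolding kernel_def Cl_RA_one using I by simp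
qed

text \<open>Since \<open>1 \<in> I J = v J\<close>, the generator \<open>v\<close> is a unit already in \<open>B\<close>.\<close>

lemma principal_if_iota_image_l_coset:
  assumes I: "I \<in> carrier GBA" and vU: "v \<in> Units TB" and iI: "iota ` I = v <#\<^bsub>TB\<^esub> A'"
  shows "I \<in> HBA"
proof -
  obtain J where J: "J \<in> carrier GBA" "submod_prod B I J = A" using b.Inv_group_carrier_inverse[OF I] .
  have c: "I \<subseteq> carrier B" "J \<subseteq> carrier B" using I J b.Inv_group_carrier_subset by auto
  have "v \<in> iota ` I" using iI tb.l_coset_self[OF tb.Units_closed[OF vU] one_in_A'] by simp
  then obtain b where b: "b \<in> I" "v = iota b" by blast
  have "\<one>\<^bsub>TB\<^esub> \<in> iota ` submod_prod B I J" using J(2) one_in_A' by simp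
  also have "iota ` submod_prod B I J = v <#\<^bsub>TB\<^esub> submod_prod TB A' (iota ` J)"
    using iota.image_submod_prod[OF c] iI tb.submod_prod_l_coset[OF _ A'_subset iota_image_subset[OF c(2)]] vU
    by auto
  also have "submod_prod TB A' (iota ` J) = iota ` J"
    using submod_prod_A'_iota[OF b.Inv_group_carrier_R_submod[OF J(1)]] .
  finally obtain b' where b': "b' \<in> J" "\<one>\<^bsub>TB\<^esub> = v \<otimes>\<^bsub>TB\<^esub> iota b'"
    unfolding tb.l_coset_ring_eq by auto
  have bc: "b \<in> carrier B" "b' \<in> carrier B" using b(1) b'(1) c by auto
  have "iota b \<otimes>\<^bsub>TB\<^esub> iota b' = \<one>\<^bsub>TB\<^esub>" using b'(2) b(2) by simp
  then have "iota (b \<otimes>\<^bsub>B\<^esub> b') = iota \<one>\<^bsub>B\<^esub>" using iota.hom_mult[OF bc] iota.hom_one by simp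
  then have "b \<otimes>\<^bsub>B\<^esub> b' = \<one>\<^bsub>B\<^esub>" by (rule inj_onD[OF iota_inj]) (use bc in auto)
  then have "b \<in> Units B" using bc b.m_comm[OF bc] unfolding Units_def by (auto intro!: bexI[of _ b'])
  moreover have "iota ` I = iota ` (A #>\<^bsub>B\<^esub> b)"
    using iI b(2) iota.image_r_coset[OF bc(1) A_subset] tb.r_coset_eq_l_coset[OF A'_subset iota.hom_closed[OF bc(1)]]
    by simp
  then have "I = A #>\<^bsub>B\<^esub> b"
    using inj_on_image_eq_iff[OF iota_inj c(1) b.r_coset_subset_G[OF A_subset bc(1)]] by simp
  ultimately show ?thesis using b.principal_ideals_eq by auto
qed

lemma kernel_embed_class_principal:
  assumes "I \<in> kernel GBA (Cl RA) embed_class" shows "I \<in> HBA"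
proof -
  have I: "I \<in> carrier GBA" and "embed_class I = HA" using assms unfolding kernel_def Cl_RA_one by auto
  obtain u where u: "u \<in> span_generators I" using span_generators_nonempty[OF I] by blast
  have c: "I \<subseteq> carrier B" using I b.Inv_group_carrier_subset by auto
  have uU: "u \<in> Units TB" using u unfolding span_generators_def by auto
  have "scaled_ideal u I \<in> HA"
    using \<open>embed_class I = HA\<close> embed_class_eq[OF I u] GA.rcos_self[OF scaled_ideal_Inv_group[OF I u] subgroup_HA]
    by simp
  then obtain w where w: "w \<in> Units TA" "scaled_ideal u I = cA #>\<^bsub>TA\<^esub> w" using ta.principal_ideals_eq by auto
  have "inv\<^bsub>TB\<^esub> u <#\<^bsub>TB\<^esub> iota ` I = tau w <#\<^bsub>TB\<^esub> A'"
    using image_scaled_ideal[OF c u] w tau.image_r_coset[OF _ cA_subset] tau_canon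
      tb.r_coset_eq_l_coset[OF A'_subset] tau_closed by auto
  then have "iota ` I = u <#\<^bsub>TB\<^esub> (tau w <#\<^bsub>TB\<^esub> A')"
    using tb.l_coset_cancel_inv[OF uU iota_image_subset[OF c]] by simp
  then have "iota ` I = (u \<otimes>\<^bsub>TB\<^esub> tau w) <#\<^bsub>TB\<^esub> A'"
    using tb.l_coset_l_coset[OF tb.Units_closed[OF uU] _ A'_subset] tau_closed w(1) by auto
  moreover have "u \<otimes>\<^bsub>TB\<^esub> tau w \<in> Units TB" using uU tau.hom_Units(1)[OF w(1)] by simp
  ultimately show ?thesis using principal_if_iota_image_l_coset[OF I] by blast
qed

lemma kernel_embed_class: "kernel GBA (Cl RA) embed_class = HBA"
  using principal_in_kernel_embed_class kernel_embed_class_principal by blast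

text \<open>An invertible \<open>A\<close>-submodule \<open>I\<close> of \<open>B\<close> generates \<open>B\<close> as a \<open>B\<close>-module, so \<open>B (u\<^sup>-\<^sup>1 I) = u\<^sup>-\<^sup>1 B\<close>.\<close>

lemma embed_class_in_kernel_Cl_map:
  assumes I: "I \<in> carrier GBA" shows "embed_class I \<in> kernel (Cl RA) (Cl B) (Cl_map B A)"
proof -
  obtain u where u: "u \<in> span_generators I" using span_generators_nonempty[OF I] by blast
  obtain J where J: "J \<in> carrier GBA" "submod_prod B I J = A" using b.Inv_group_carrier_inverse[OF I] .
  have c: "I \<subseteq> carrier B" "J \<subseteq> carrier B" using I J b.Inv_group_carrier_subset by auto
  have uU: "inv\<^bsub>TB\<^esub> u \<in> Units TB" using u unfolding span_generators_def by auto
  have one: "\<one>\<^bsub>TB\<^esub> \<in> submod_prod TB (iota ` I) (iota ` J)"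
    using iota.image_submod_prod[OF c] J(2) one_in_A' by simp
  have "iota ` I \<subseteq> cB" "iota ` J \<subseteq> cB" using c cB_eq_image by auto
  then have full: "submod_prod TB cB (iota ` I) = cB"
    using tb.submod_prod_subring_eq_if_one_mem[OF subring_cB _ _ one] by blast
  have uc: "inv\<^bsub>TB\<^esub> u \<in> carrier TB" using uU by auto
  have iI: "iota ` I \<subseteq> carrier TB" using iota_image_subset[OF c(1)] .
  have "B_span (scaled_ideal u I) = submod_prod TB cB (inv\<^bsub>TB\<^esub> u <#\<^bsub>TB\<^esub> iota ` I)"
    unfolding B_span_def image_scaled_ideal[OF c(1) u] ..
  also have "\<dots> = inv\<^bsub>TB\<^esub> u <#\<^bsub>TB\<^esub> submod_prod TB (iota ` I) cB"
    using tb.submod_prod_comm[OF cB_subset tb.l_coset_subset_carrier[OF uc iI]]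
      tb.submod_prod_l_coset[OF uc iI cB_subset] by simp
  also have "submod_prod TB (iota ` I) cB = cB" using full tb.submod_prod_comm[OF cB_subset iI] by simp
  finally have "B_span (scaled_ideal u I) = cB #>\<^bsub>TB\<^esub> inv\<^bsub>TB\<^esub> u"
    using tb.r_coset_eq_l_coset[OF cB_subset uc] by simp
  then have "ext_class (scaled_ideal u I) = \<one>\<^bsub>Cl B\<^esub>"
    unfolding ext_class_def Cl_B_one
    using GB.coset_join2[OF subgroup.mem_carrier[OF subgroup_HB] subgroup_HB] HB_r_coset[OF uU] by simp
  then show ?thesis
    using Cl_map_rcos[OF scaled_ideal_Inv_group[OF I u]] embed_class_eq[OF I u] embed_class.hom_closed[OF I]
    unfolding kernel_def by simp
qed

lemma B_span_principal_vimage_Inv_group: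
  assumes L: "L \<in> carrier GA" and w: "w \<in> Units TB" "B_span L = cB #>\<^bsub>TB\<^esub> w"
  shows "{b \<in> carrier B. iota b \<in> inv\<^bsub>TB\<^esub> w <#\<^bsub>TB\<^esub> tau ` L} \<in> carrier GBA"
proof -
  obtain L' where L': "L' \<in> carrier GA" "submod_prod TA L L' = cA" using ta.Inv_group_carrier_inverse[OF L] .
  have Lc: "L \<subseteq> carrier TA" "L' \<subseteq> carrier TA" using L L'(1) ta.Inv_group_carrier_subset by auto
  have tc: "tau ` L \<subseteq> carrier TB" "tau ` L' \<subseteq> carrier TB" using tau_image_subset Lc by auto
  have wc: "w \<in> carrier TB" "inv\<^bsub>TB\<^esub> w \<in> Units TB" "inv\<^bsub>TB\<^esub> w \<in> carrier TB" using w(1) by auto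
  have "submod_prod TB (B_span L) (B_span L') = cB" using B_span_submod_prod[OF Lc] L'(2) B_span_cA by simp
  then have L'w: "B_span L' = cB #>\<^bsub>TB\<^esub> inv\<^bsub>TB\<^esub> w"
    using tb.Inv_group_inv_eq[OF subring_cB B_span_Inv_group[OF L] B_span_Inv_group[OF L'(1)]]
      tb.Inv_group_inv_r_coset[OF subring_cB w(1)] w(2) by simp
  define Z1 where "Z1 = inv\<^bsub>TB\<^esub> w <#\<^bsub>TB\<^esub> tau ` L"
  define Z2 where "Z2 = w <#\<^bsub>TB\<^esub> tau ` L'"
  have "Z1 \<subseteq> cB"
    unfolding Z1_def using tb.l_coset_inv_subset[OF cB_subset w(1)] tau_image_subset_B_span[OF Lc(1)] w(2) by simp
  moreover have "inv\<^bsub>TB\<^esub> (inv\<^bsub>TB\<^esub> w) <#\<^bsub>TB\<^esub> tau ` L' \<subseteq> cB"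
    using tb.l_coset_inv_subset[OF cB_subset wc(2)] tau_image_subset_B_span[OF Lc(2)] L'w by simp
  then have "Z2 \<subseteq> cB" unfolding Z2_def using tb.Units_inv_inv[OF w(1)] by simp
  ultimately have Z_sub: "Z1 \<subseteq> iota ` carrier B" "Z2 \<subseteq> iota ` carrier B" using cB_eq_image by auto
  have "submod_prod TB Z1 Z2 = (inv\<^bsub>TB\<^esub> w \<otimes>\<^bsub>TB\<^esub> w) <#\<^bsub>TB\<^esub> submod_prod TB (tau ` L) (tau ` L')"
    unfolding Z1_def Z2_def using tb.submod_prod_l_coset_l_coset[OF wc(3) wc(1) tc] .
  also have "\<dots> = tau ` submod_prod TA L L'"
    using w(1) tb.l_coset_one[OF tb.submod_prod_carrier[OF tc]] tau.image_submod_prod[OF Lc] by simp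
  finally have Z12: "submod_prod TB Z1 Z2 = iota ` A" using L'(2) tau_canon by simp
  have "R_submod TB (iota ` A) (v <#\<^bsub>TB\<^esub> tau ` M)" if "M \<in> carrier GA" "v \<in> carrier TB" for v M
    using tb.R_submod_l_coset[OF tau.R_submod_image[OF ta.Inv_group_carrier_R_submod[OF that(1)] cA_subset]
        that(2)] tau_canon A'_subset by simp
  then have "R_submod TB (iota ` A) Z1" "R_submod TB (iota ` A) Z2"
    unfolding Z1_def Z2_def using L L'(1) wc by auto
  then show ?thesis
    using iota.vimage_Inv_group[OF iota_inj A_subset _ Z_sub(1) _ Z_sub(2) Z12] unfolding Z1_def by blast
qed

lemma kernel_Cl_map_in_image:
  assumes "K \<in> kernel (Cl RA) (Cl B) (Cl_map B A)" shows "K \<in> embed_class ` carrier GBA"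
proof -
  obtain L where L: "L \<in> carrier GA" "K = HA #>\<^bsub>GA\<^esub> L"
    using assms unfolding kernel_def by (auto elim: Cl_RA_cases)
  obtain L' where L': "L' \<in> carrier GA" "submod_prod TA L L' = cA" using ta.Inv_group_carrier_inverse[OF L(1)] .
  have Lc: "L \<subseteq> carrier TA" "L' \<subseteq> carrier TA" using L(1) L'(1) ta.Inv_group_carrier_subset by auto
  have tc: "tau ` L \<subseteq> carrier TB" using tau_image_subset Lc by auto
  have "ext_class L = HB" using assms L Cl_map_rcos unfolding kernel_def Cl_B_one by auto
  then have "B_span L \<in> HB" using GB.rcos_self[OF B_span_Inv_group[OF L(1)] subgroup_HB] unfolding ext_class_def by simp
  then obtain w where w: "w \<in> Units TB" "B_span L = cB #>\<^bsub>TB\<^esub> w" using tb.principal_ideals_eq by auto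
  have wc: "inv\<^bsub>TB\<^esub> w \<in> Units TB" "inv\<^bsub>TB\<^esub> w \<in> carrier TB" using w(1) by auto
  define I where "I = {b \<in> carrier B. iota b \<in> inv\<^bsub>TB\<^esub> w <#\<^bsub>TB\<^esub> tau ` L}"
  have I: "I \<in> carrier GBA" unfolding I_def using B_span_principal_vimage_Inv_group[OF L(1) w] .
  have "inv\<^bsub>TB\<^esub> w <#\<^bsub>TB\<^esub> tau ` L \<subseteq> cB"
    using tb.l_coset_inv_subset[OF cB_subset w(1)] tau_image_subset_B_span[OF Lc(1)] w(2) by simp
  then have iI: "iota ` I = inv\<^bsub>TB\<^esub> w <#\<^bsub>TB\<^esub> tau ` L" unfolding I_def using cB_eq_image by auto
  have one: "\<one>\<^bsub>TB\<^esub> \<in> submod_prod TB (tau ` L) (tau ` L')"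
    using tau.image_submod_prod[OF Lc] L'(2) tau_canon one_in_A' by simp
  have "tau ` L \<subseteq> T'" "tau ` L' \<subseteq> T'" using Lc by auto
  then have "submod_prod TB T' (tau ` L) = T'"
    using tb.submod_prod_subring_eq_if_one_mem[OF subring_T' _ _ one] by blast
  then have "T'_span I = T' #>\<^bsub>TB\<^esub> inv\<^bsub>TB\<^esub> w"
    unfolding T'_span_def iI
    using tb.submod_prod_comm[OF T'_subset tb.l_coset_subset_carrier[OF wc(2) tc]] tb.submod_prod_comm[OF tc T'_subset]
      tb.submod_prod_l_coset[OF wc(2) tc T'_subset] tb.r_coset_eq_l_coset[OF T'_subset wc(2)] by simp
  then have u: "inv\<^bsub>TB\<^esub> w \<in> span_generators I" unfolding span_generators_def using wc by simp
  have "scaled_ideal (inv\<^bsub>TB\<^esub> w) I = {x \<in> carrier TA. tau x \<in> tau ` L}"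
    unfolding scaled_ideal_def iI using tb.l_coset_cancel_inv[OF w(1) tc] w(1) by simp
  also have "\<dots> = L" using inj_on_image_mem_iff[OF tau_inj _ Lc(1)] Lc(1) by auto
  finally show ?thesis using embed_class_eq[OF I u] L(2) I by auto
qed

theorem exact_Cart_group_Cl:
  "\<exists>f. f \<in> hom (Cart_group B A) (Cl RA) \<and> inj_on f (carrier (Cart_group B A))
       \<and> f ` carrier (Cart_group B A) = kernel (Cl RA) (Cl B) (Cl_map B A)"
proof -
  have "Cart_group B A = GBA Mod kernel GBA (Cl RA) embed_class"
    unfolding Cart_group_def kernel_embed_class ..
  moreover have "embed_class ` carrier GBA = kernel (Cl RA) (Cl B) (Cl_map B A)"
    using embed_class_in_kernel_Cl_map kernel_Cl_map_in_image by blast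
  ultimately show ?thesis
    using embed_class.FactGroup_hom embed_class.FactGroup_inj_on embed_class.FactGroup_image
    by (intro exI[of _ "\<lambda>Z. the_elem (embed_class ` Z)"]) simp
qed

end
theorem theorem5p3:
  fixes B :: "('a, 'm) ring_scheme" and A :: "'a set"
  assumes "cring B"
    and "subring A B"
    and "reduced (B\<lparr>carrier := A\<rparr>)"
    and "finite (minimal_primes (B\<lparr>carrier := A\<rparr>))"
    and "\<forall>s. nzd (B\<lparr>carrier := A\<rparr>) s \<longrightarrow> nzd B s"
  shows "comm_group (Cart_group B A) \<and> comm_group (Cl (B\<lparr>carrier := A\<rparr>)) \<and> comm_group (Cl B)
    \<and> Cl_map B A \<in> hom (Cl (B\<lparr>carrier := A\<rparr>)) (Cl B)
    \<and> (\<exists>f. f \<in> hom (Cart_group B A) (Cl (B\<lparr>carrier := A\<rparr>))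
           \<and> inj_on f (carrier (Cart_group B A))
           \<and> f ` carrier (Cart_group B A) = kernel (Cl (B\<lparr>carrier := A\<rparr>)) (Cl B) (Cl_map B A))"
proof -
  interpret nzd_preserving_ext B A by (rule nzd_preserving_ext.intro[OF assms])
  show ?thesis
    using b.comm_group_Cart_group[OF subring_A] comm_group_Cl_RA comm_group_Cl_B Cl_map_hom
      exact_Cart_group_Cl by blast
qed

end
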